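(* Under the standing assumptions (with $K\neq0$), suppose $\lambda_{\max}(M(0))<1$. Then there exists a unique $r^*\in(0,r_A)$ with $\lambda_{\max}(M(r^* ))=1$. Moreover $\lambda_{\max}(M(r))<1$ for $r\in[0,r^* )$ and $\lambda_{\max}(M(r))>1$ for $r\in(r^*,r_A)$; in the latter case there is no $\mathbf w\in\mathbb R^n$ with all $w_j>0$ and $\mathbf w^T(I-M(r))\ge\mathbf 0^T$.
   Context: Fix $n\ge 2$. $A$ and $K$ are $n\times n$ entrywise nonnegative real matrices, with $K$ not the zero matrix; $\delta_1,\dots,\delta_n\in(0,1]$, $D=K\,\mathrm{diag}(\delta_1,\dots,\delta_n)$, and $\tilde A=A+D$. $L=\mathrm{diag}(l_1,\dots,l_n)$ with all $l_j>0$. $B$ is an $n\times n$ entrywise nonnegative matrix with no zero column. Standing assumption: $\tilde A$ is irreducible and $\lambda_{\max}(\tilde A)<1$, where $\lambda_{\max}(X)$ denotes the spectral radius of a square matrix $X$. $r_A>0$ is defined by $\lambda_{\max}(\tilde A+r_AK)=1$. For $r\in[0,r_A)$, $M(r):=L[I-\tilde A-rK]^{-1}B$; note $M(0)=L(I-\tilde A)^{-1}B$. Vector inequalities are componentwise. *)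

theory Defs
  imports "Jordan_Normal_Form.Spectral_Radius" "Jordan_Normal_Form.Gauss_Jordan_Elimination"
begin

definition rho :: "real mat \<Rightarrow> real" where
  "rho X = spectral_radius (map_mat complex_of_real X)"

definition irreducible_mat :: "real mat \<Rightarrow> bool" where
  "irreducible_mat X \<longleftrightarrow>
     (\<forall>i<dim_row X. \<forall>j<dim_row X.
        (i, j) \<in> {(a, b). a < dim_row X \<and> b < dim_row X \<and> X $$ (a, b) \<noteq> 0}\<^sup>+)"

definition nonneg_mat :: "real mat \<Rightarrow> bool" where
  "nonneg_mat X \<longleftrightarrow> (\<forall>i<dim_row X. \<forall>j<dim_col X. X $$ (i, j) \<ge> 0)"

definition Mmat :: "nat \<Rightarrow> real mat \<Rightarrow> real mat \<Rightarrow> real mat \<Rightarrow> real mat \<Rightarrow> real \<Rightarrow> real mat" where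
  "Mmat n L At K B r = L * the (mat_inverse (1\<^sub>m n - At - r \<cdot>\<^sub>m K)) * B"

end

theory Submission
  imports Defs
begin

(* For 0 <= r < rA the matrix T r = A + D + r K is nonnegative, irreducible and has
   spectral radius below 1, since its spectral radius increases strictly with r and equals 1 at
   r = rA.  Hence N r = (I - T r)^-1 exists, is entrywise positive
   and satisfies the resolvent identity N s = N r + (s - r) N s K N r.  Consequently
   M s = M r + (s - r) L (N s K N r) B with a positive last factor, so rho (M r) is strictly
   increasing.  The same identity shows that rho (M r) < 1 persists for slightly larger r and
   rho (M r) > 1 for slightly smaller r, which replaces continuity of the spectral radius, and
   rho (M r) is unbounded as r approaches rA because N r blows up there.  So rho (M r) crosses 1
   exactly once.  Beyond the crossing a positive w with w^T (I - M r) >= 0 would make w a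
   subinvariant vector of the transpose of M r, forcing rho (M r) <= 1. *)

section \<open>Entrywise order\<close>

definition positive_mat :: "real mat \<Rightarrow> bool" where
  "positive_mat X \<longleftrightarrow> (\<forall>i<dim_row X. \<forall>j<dim_col X. 0 < X $$ (i, j))"

abbreviation cmat :: "real mat \<Rightarrow> complex mat" where
  "cmat X \<equiv> map_mat complex_of_real X"

lemma less_eq_vecI:
  "v \<in> carrier_vec n \<Longrightarrow> w \<in> carrier_vec n \<Longrightarrow> (\<And>i. i < n \<Longrightarrow> v $ i \<le> w $ i) \<Longrightarrow> v \<le> w"
  by (auto simp: less_eq_vec_def)

lemma less_eq_vecD: "v \<le> w \<Longrightarrow> w \<in> carrier_vec n \<Longrightarrow> i < n \<Longrightarrow> v $ i \<le> w $ i"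
  by (auto simp: less_eq_vec_def)

lemma less_eq_matI:
  "A \<in> carrier_mat nr nc \<Longrightarrow> B \<in> carrier_mat nr nc \<Longrightarrow>
    (\<And>i j. i < nr \<Longrightarrow> j < nc \<Longrightarrow> A $$ (i, j) \<le> B $$ (i, j)) \<Longrightarrow> A \<le> B"
  by (auto simp: less_eq_mat_def)

lemma less_eq_matD: "A \<le> B \<Longrightarrow> B \<in> carrier_mat nr nc \<Longrightarrow> i < nr \<Longrightarrow> j < nc \<Longrightarrow> A $$ (i, j) \<le> B $$ (i, j)"
  by (auto simp: less_eq_mat_def)

lemma nonneg_vecI: "v \<in> carrier_vec n \<Longrightarrow> (\<And>i. i < n \<Longrightarrow> 0 \<le> v $ i) \<Longrightarrow> 0\<^sub>v n \<le> v"
  by (auto simp: less_eq_vec_def)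

lemma nonneg_vecD: "0\<^sub>v n \<le> v \<Longrightarrow> i < n \<Longrightarrow> 0 \<le> v $ i"
  by (auto simp: less_eq_vec_def)

lemma nonneg_matD: "nonneg_mat X \<Longrightarrow> X \<in> carrier_mat nr nc \<Longrightarrow> i < nr \<Longrightarrow> j < nc \<Longrightarrow> 0 \<le> X $$ (i, j)"
  by (auto simp: nonneg_mat_def)

lemma nonneg_mat_iff:
  "X \<in> carrier_mat nr nc \<Longrightarrow> nonneg_mat X \<longleftrightarrow> (\<forall>i<nr. \<forall>j<nc. 0 \<le> X $$ (i, j))"
  by (auto simp: nonneg_mat_def)

lemma positive_matD: "positive_mat X \<Longrightarrow> X \<in> carrier_mat nr nc \<Longrightarrow> i < nr \<Longrightarrow> j < nc \<Longrightarrow> 0 < X $$ (i, j)"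
  by (auto simp: positive_mat_def)

lemma positive_mat_iff:
  "X \<in> carrier_mat nr nc \<Longrightarrow> positive_mat X \<longleftrightarrow> (\<forall>i<nr. \<forall>j<nc. 0 < X $$ (i, j))"
  by (auto simp: positive_mat_def)

lemma positive_imp_nonneg_mat: "positive_mat X \<Longrightarrow> nonneg_mat X"
  by (auto simp: positive_mat_def nonneg_mat_def less_imp_le)

lemma positive_vecD:
  fixes v :: "real vec"
  assumes "v \<in> carrier_vec n" "\<forall>i<n. 0 < v $ i" "0 < n"
  shows "0\<^sub>v n \<le> v" "v \<noteq> 0\<^sub>v n"
proof -
  show "0\<^sub>v n \<le> v" using assms by (intro nonneg_vecI) (auto simp: less_imp_le)
  have "(0\<^sub>v n :: real vec) $ 0 = 0" using \<open>0 < n\<close> by simp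
  with assms show "v \<noteq> 0\<^sub>v n" by force
qed

lemma nonzero_vec_index:
  assumes "v \<in> carrier_vec n" "v \<noteq> 0\<^sub>v n"
  obtains i where "i < n" "v $ i \<noteq> 0"
  using assms by (metis carrier_vecD eq_vecI index_zero_vec(1,2))

lemma nonzero_mat_index:
  assumes "A \<in> carrier_mat nr nc" "A \<noteq> 0\<^sub>m nr nc"
  obtains i j where "i < nr" "j < nc" "A $$ (i, j) \<noteq> 0"
proof -
  have "\<not> (\<forall>i<nr. \<forall>j<nc. A $$ (i, j) = 0)"
  proof
    assume "\<forall>i<nr. \<forall>j<nc. A $$ (i, j) = 0"
    then have "A = 0\<^sub>m nr nc" using assms(1) by (intro eq_matI) auto
    with assms(2) show False ..
  qed
  then show ?thesis using that by blast
qed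

lemma vec_upper_bound:
  fixes x :: "real vec"
  obtains \<Phi> where "0 < \<Phi>" "\<And>i. i < n \<Longrightarrow> x $ i \<le> \<Phi>"
proof
  show "0 < 1 + (\<Sum>i<n. \<bar>x $ i\<bar>)" by (simp add: add_pos_nonneg sum_nonneg)
  fix i assume "i < n"
  then have "\<bar>x $ i\<bar> \<le> (\<Sum>i<n. \<bar>x $ i\<bar>)" by (intro member_le_sum) auto
  then show "x $ i \<le> 1 + (\<Sum>i<n. \<bar>x $ i\<bar>)" by linarith
qed

lemma positive_vec_lower_bound:
  fixes x :: "real vec"
  assumes "\<forall>i<n. 0 < x $ i" "0 < n"
  obtains m where "0 < m" "\<And>i. i < n \<Longrightarrow> m \<le> x $ i"
proof
  have "Min ((\<lambda>i. x $ i) ` {..<n}) \<in> (\<lambda>i. x $ i) ` {..<n}" using \<open>0 < n\<close> by (intro Min_in) auto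
  then show "0 < Min ((\<lambda>i. x $ i) ` {..<n})" using assms(1) by auto
  show "Min ((\<lambda>i. x $ i) ` {..<n}) \<le> x $ i" if "i < n" for i using that by (intro Min_le) auto
qed

lemma index_mult_mat_sum:
  "A \<in> carrier_mat nr n \<Longrightarrow> B \<in> carrier_mat n nc \<Longrightarrow> i < nr \<Longrightarrow> j < nc \<Longrightarrow>
    (A * B) $$ (i, j) = (\<Sum>k = 0..<n. A $$ (i, k) * B $$ (k, j))"
  by (simp add: scalar_prod_def)

lemma index_mult_mat_vec_sum:
  "A \<in> carrier_mat nr n \<Longrightarrow> v \<in> carrier_vec n \<Longrightarrow> i < nr \<Longrightarrow>
    (A *\<^sub>v v) $ i = (\<Sum>k = 0..<n. A $$ (i, k) * v $ k)"
  by (simp add: scalar_prod_def)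

lemma smult_mult_mat_vec:
  fixes A :: "'a :: comm_ring mat"
  shows "A \<in> carrier_mat nr n \<Longrightarrow> v \<in> carrier_vec n \<Longrightarrow> (a \<cdot>\<^sub>m A) *\<^sub>v v = a \<cdot>\<^sub>v (A *\<^sub>v v)"
  by (intro eq_vecI) (auto simp: scalar_prod_def sum_distrib_left ac_simps)

lemma mult_mat_vec_zero: "A \<in> carrier_mat nr n \<Longrightarrow> A *\<^sub>v 0\<^sub>v n = 0\<^sub>v nr"
  by (intro eq_vecI) (auto simp: scalar_prod_def)

lemma mult_unit_vec_eq_col:
  fixes X :: "'a :: semiring_1 mat"
  shows "X \<in> carrier_mat n n \<Longrightarrow> j < n \<Longrightarrow> X *\<^sub>v unit_vec n j = col X j"
  using col_mult2[of X n n "1\<^sub>m n" n j] right_mult_one_mat[of X n n] by simp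

lemma pow_mat_smult:
  fixes X :: "'a :: comm_ring_1 mat"
  assumes "X \<in> carrier_mat n n"
  shows "(a \<cdot>\<^sub>m X) ^\<^sub>m k = a ^ k \<cdot>\<^sub>m X ^\<^sub>m k"
proof (induct k)
  case (Suc k)
  have "(a \<cdot>\<^sub>m X) ^\<^sub>m Suc k = (a ^ k \<cdot>\<^sub>m X ^\<^sub>m k) * (a \<cdot>\<^sub>m X)" using Suc by simp
  also have "\<dots> = a ^ Suc k \<cdot>\<^sub>m (X ^\<^sub>m k * X)"
    using assms by (intro eq_matI) (auto simp: scalar_prod_def sum_distrib_left ac_simps)
  finally show ?case by simp
qed (use assms in auto)

lemma mult_add_smult_mult:
  fixes X :: "'a :: comm_ring mat"
  assumes "L \<in> carrier_mat n n" "X \<in> carrier_mat n n" "Z \<in> carrier_mat n n" "R \<in> carrier_mat n n"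
  shows "L * (X + c \<cdot>\<^sub>m Z) * R = L * X * R + c \<cdot>\<^sub>m (L * Z * R)"
proof -
  have "L * (X + c \<cdot>\<^sub>m Z) = L * X + c \<cdot>\<^sub>m (L * Z)"
    using assms by (simp add: mult_add_distrib_mat[of _ n n] mult_smult_distrib[of _ n n])
  then show ?thesis
    using assms by (simp add: add_mult_distrib_mat[of _ n n] mult_smult_assoc_mat[of _ n n])
qed

lemma nonneg_mat_one: "nonneg_mat (1\<^sub>m n)"
  by (simp add: nonneg_mat_def)

lemma nonneg_mat_add:
  assumes "A \<in> carrier_mat nr nc" "B \<in> carrier_mat nr nc" "nonneg_mat A" "nonneg_mat B"
  shows "nonneg_mat (A + B)"
  using assms by (simp add: nonneg_mat_iff[OF add_carrier_mat[OF assms(2)]] nonneg_matD)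

lemma nonneg_mat_smult: "0 \<le> c \<Longrightarrow> nonneg_mat X \<Longrightarrow> nonneg_mat (c \<cdot>\<^sub>m X)"
  by (simp add: nonneg_mat_def)

lemma nonneg_mat_mult:
  assumes A: "A \<in> carrier_mat nr n" and B: "B \<in> carrier_mat n nc" and "nonneg_mat A" "nonneg_mat B"
  shows "nonneg_mat (A * B)"
  unfolding nonneg_mat_def
proof (intro allI impI)
  fix i j assume "i < dim_row (A * B)" "j < dim_col (A * B)"
  with A B have "i < nr" "j < nc" by auto
  then show "0 \<le> (A * B) $$ (i, j)"
    using assms by (auto simp: index_mult_mat_sum[OF A B] nonneg_mat_def simp del: index_mult_mat
        intro!: sum_nonneg)
qed

lemma nonneg_mat_pow:
  assumes "X \<in> carrier_mat n n" "nonneg_mat X"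
  shows "nonneg_mat (X ^\<^sub>m k)"
proof (induct k)
  case (Suc k)
  then show ?case using assms by (simp add: nonneg_mat_mult[of _ n n])
qed (use assms in \<open>simp add: nonneg_mat_def\<close>)

lemma nonneg_mat_mono:
  assumes A: "A \<in> carrier_mat nr nc" and B: "B \<in> carrier_mat nr nc" and "nonneg_mat A" "A \<le> B"
  shows "nonneg_mat B"
  unfolding nonneg_mat_iff[OF B]
  using nonneg_matD[OF assms(3) A] less_eq_matD[OF assms(4) B] by (meson order_trans)

lemma le_add_nonneg_mat:
  assumes A: "A \<in> carrier_mat nr nc" and B: "B \<in> carrier_mat nr nc" and "nonneg_mat B"
  shows "A \<le> A + B"
proof (rule less_eq_matI[of _ nr nc])
  fix i j assume "i < nr" "j < nc"
  with A B nonneg_matD[OF assms(3) B this] show "A $$ (i, j) \<le> (A + B) $$ (i, j)" by simp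
qed (use A B in auto)

lemma add_smult_mono_mat:
  fixes A F G :: "real mat"
  assumes "A \<in> carrier_mat n n" "F \<in> carrier_mat n n" "G \<in> carrier_mat n n" "F \<le> G" "0 \<le> c"
  shows "A + c \<cdot>\<^sub>m F \<le> A + c \<cdot>\<^sub>m G"
  using assms less_eq_matD[of F G n n] by (intro less_eq_matI[of _ n n]) (auto intro: mult_left_mono)

lemma smult_vec_mono:
  fixes v w :: "real vec"
  shows "0 \<le> a \<Longrightarrow> v \<le> w \<Longrightarrow> a \<cdot>\<^sub>v v \<le> a \<cdot>\<^sub>v w"
  by (auto simp: less_eq_vec_def mult_left_mono)

lemma mult_mat_entry_ge:
  assumes "A \<in> carrier_mat nr n" "B \<in> carrier_mat n nc" "nonneg_mat A" "nonneg_mat B"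
    and "i < nr" "k < n" "j < nc"
  shows "A $$ (i, k) * B $$ (k, j) \<le> (A * B) $$ (i, j)"
proof -
  have "A $$ (i, k) * B $$ (k, j) \<le> (\<Sum>k = 0..<n. A $$ (i, k) * B $$ (k, j))"
    using assms by (intro member_le_sum) (auto simp: nonneg_mat_def)
  with assms show ?thesis by (simp add: index_mult_mat_sum del: index_mult_mat)
qed

lemma mult_mat_vec_entry_ge:
  assumes "A \<in> carrier_mat nr n" "v \<in> carrier_vec n" "nonneg_mat A" "0\<^sub>v n \<le> v"
    and "i < nr" "k < n"
  shows "A $$ (i, k) * v $ k \<le> (A *\<^sub>v v) $ i"
proof -
  have "A $$ (i, k) * v $ k \<le> (\<Sum>k = 0..<n. A $$ (i, k) * v $ k)"
    using assms by (intro member_le_sum) (auto simp: nonneg_mat_def nonneg_vecD)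
  with assms show ?thesis by (simp add: index_mult_mat_vec_sum del: index_mult_mat_vec)
qed

lemma mult_mat_mono_left:
  assumes A: "A \<in> carrier_mat nr n" and B: "B \<in> carrier_mat n nc" and C: "C \<in> carrier_mat n nc"
    and "nonneg_mat A" "B \<le> C"
  shows "A * B \<le> A * C"
proof (rule less_eq_matI[of _ nr nc])
  fix i j assume "i < nr" "j < nc"
  then show "(A * B) $$ (i, j) \<le> (A * C) $$ (i, j)"
    using assms by (auto simp: index_mult_mat_sum[OF A B] index_mult_mat_sum[OF A C] nonneg_mat_def
        simp del: index_mult_mat intro!: sum_mono mult_left_mono less_eq_matD[of B C n nc])
qed (use assms in auto)

lemma mult_mat_mono_right:
  assumes A: "A \<in> carrier_mat nr n" and B: "B \<in> carrier_mat nr n" and C: "C \<in> carrier_mat n nc"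
    and "nonneg_mat C" "A \<le> B"
  shows "A * C \<le> B * C"
proof (rule less_eq_matI[of _ nr nc])
  fix i j assume "i < nr" "j < nc"
  then show "(A * C) $$ (i, j) \<le> (B * C) $$ (i, j)"
    using assms by (auto simp: index_mult_mat_sum[OF A C] index_mult_mat_sum[OF B C] nonneg_mat_def
        simp del: index_mult_mat intro!: sum_mono mult_right_mono less_eq_matD[of A B nr n])
qed (use assms in auto)

lemma mult_mat_vec_mono:
  assumes A: "A \<in> carrier_mat nr n" and v: "v \<in> carrier_vec n" and w: "w \<in> carrier_vec n"
    and "nonneg_mat A" "v \<le> w"
  shows "A *\<^sub>v v \<le> A *\<^sub>v w"
proof (rule less_eq_vecI[of _ nr])
  fix i assume "i < nr"
  then show "(A *\<^sub>v v) $ i \<le> (A *\<^sub>v w) $ i"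
    using assms by (auto simp: index_mult_mat_vec_sum[OF A v] index_mult_mat_vec_sum[OF A w]
        nonneg_mat_def simp del: index_mult_mat_vec intro!: sum_mono mult_left_mono less_eq_vecD[of v w n])
qed (use assms in auto)

lemma mult_mat_vec_mono_mat:
  fixes A B :: "real mat"
  assumes A: "A \<in> carrier_mat nr n" and B: "B \<in> carrier_mat nr n" and v: "v \<in> carrier_vec n"
    and "A \<le> B" "0\<^sub>v n \<le> v"
  shows "A *\<^sub>v v \<le> B *\<^sub>v v"
proof (rule less_eq_vecI[of _ nr])
  fix i assume "i < nr"
  show "(A *\<^sub>v v) $ i \<le> (B *\<^sub>v v) $ i"
    unfolding index_mult_mat_vec_sum[OF A v \<open>i < nr\<close>] index_mult_mat_vec_sum[OF B v \<open>i < nr\<close>]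
  proof (rule sum_mono)
    fix k assume "k \<in> {0..<n}"
    then show "A $$ (i, k) * v $ k \<le> B $$ (i, k) * v $ k"
      using assms \<open>i < nr\<close> by (intro mult_right_mono less_eq_matD[of A B nr n] nonneg_vecD[of n v]) auto
  qed
qed (use assms in auto)

lemma mult_mat_vec_nonneg:
  assumes A: "A \<in> carrier_mat nr n" and v: "v \<in> carrier_vec n" and "nonneg_mat A" "0\<^sub>v n \<le> v"
  shows "0\<^sub>v nr \<le> A *\<^sub>v v"
proof (rule nonneg_vecI)
  fix i assume "i < nr"
  then show "0 \<le> (A *\<^sub>v v) $ i"
    using assms by (auto simp: index_mult_mat_vec_sum[OF A v] nonneg_mat_def nonneg_vecD
        simp del: index_mult_mat_vec intro!: sum_nonneg)
qed (use assms in auto)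

lemma pow_mat_mono:
  assumes A: "A \<in> carrier_mat n n" and B: "B \<in> carrier_mat n n" and "nonneg_mat A" "A \<le> B"
  shows "A ^\<^sub>m k \<le> B ^\<^sub>m k"
proof (induct k)
  case 0
  show ?case using assms by simp
next
  case (Suc k)
  have "nonneg_mat B" by (rule nonneg_mat_mono[OF A B assms(3,4)])
  have "A ^\<^sub>m k * A \<le> B ^\<^sub>m k * A"
    using Suc assms by (intro mult_mat_mono_right[of _ n n]) auto
  also have "\<dots> \<le> B ^\<^sub>m k * B"
    using assms \<open>nonneg_mat B\<close> by (intro mult_mat_mono_left[of _ n n] nonneg_mat_pow) auto
  finally show ?case by simp
qed

lemma mult_pow_le:
  assumes X: "X \<in> carrier_mat n n" and N: "N \<in> carrier_mat n n" and "nonneg_mat X" and NX: "N * X \<le> N"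
  shows "N * X ^\<^sub>m k \<le> N"
proof (induct k)
  case (Suc k)
  have "N * X ^\<^sub>m Suc k = N * X ^\<^sub>m k * X" using N X by (simp add: assoc_mult_mat[of _ n n _ n _ n])
  also have "\<dots> \<le> N * X"
    using Suc N X \<open>nonneg_mat X\<close> by (intro mult_mat_mono_right[of _ n n]) auto
  finally show ?case using NX by order
qed (use N X in simp)

lemma positive_mult_mat_vec_pos:
  assumes P: "P \<in> carrier_mat n n" "positive_mat P" and v: "v \<in> carrier_vec n" "0\<^sub>v n \<le> v" "v \<noteq> 0\<^sub>v n"
    and "i < n"
  shows "0 < (P *\<^sub>v v) $ i"
proof -
  obtain p where p: "p < n" "v $ p \<noteq> 0" using nonzero_vec_index[OF v(1,3)] .
  have "0 < v $ p" using nonneg_vecD[OF v(2) p(1)] p(2) by linarith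
  then have "0 < P $$ (i, p) * v $ p" using positive_matD[OF P(2,1) \<open>i < n\<close> p(1)] by simp
  also have "\<dots> \<le> (P *\<^sub>v v) $ i"
    using assms p by (intro mult_mat_vec_entry_ge[of _ n n] positive_imp_nonneg_mat) auto
  finally show ?thesis .
qed

lemma positive_mat_mult_nonzero_cols:
  assumes A: "A \<in> carrier_mat nr n" "positive_mat A" and B: "B \<in> carrier_mat n nc" "nonneg_mat B"
    and cols: "\<forall>j<nc. \<exists>k<n. B $$ (k, j) \<noteq> 0"
  shows "positive_mat (A * B)"
  unfolding positive_mat_iff[OF mult_carrier_mat[OF A(1) B(1)]]
proof (intro allI impI)
  fix i j assume ij: "i < nr" "j < nc"
  then obtain k where k: "k < n" "B $$ (k, j) \<noteq> 0" using cols by blast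
  then have "0 < B $$ (k, j)" using nonneg_matD[OF B(2,1) k(1) ij(2)] by linarith
  then have "0 < A $$ (i, k) * B $$ (k, j)" using positive_matD[OF A(2,1) ij(1) k(1)] by simp
  also have "\<dots> \<le> (A * B) $$ (i, j)"
    by (rule mult_mat_entry_ge[OF A(1) B(1) positive_imp_nonneg_mat[OF A(2)] B(2) ij(1) k(1) ij(2)])
  finally show "0 < (A * B) $$ (i, j)" .
qed

lemma positive_mat_diag_mult:
  assumes "\<forall>i<n. 0 < l i" "X \<in> carrier_mat n nc" "positive_mat X"
  shows "positive_mat (mat_diag n l * X)"
  using assms by (simp add: mat_diag_mult_left[of _ n nc] positive_mat_def)

lemma positive_mat_mult_nonneg_mult:
  assumes P: "P \<in> carrier_mat n n" "positive_mat P" and K: "K \<in> carrier_mat n n" "nonneg_mat K"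
    "K \<noteq> 0\<^sub>m n n" and Q: "Q \<in> carrier_mat n n" "positive_mat Q"
  shows "positive_mat (P * K * Q)"
proof -
  obtain a b where ab: "a < n" "b < n" "K $$ (a, b) \<noteq> 0" using nonzero_mat_index[OF K(1,3)] .
  have "0 < K $$ (a, b)" using nonneg_matD[OF K(2,1) ab(1,2)] ab(3) by linarith
  have PK: "P * K \<in> carrier_mat n n" "nonneg_mat (P * K)"
    using P K by (auto intro: nonneg_mat_mult positive_imp_nonneg_mat)
  show ?thesis
    unfolding positive_mat_iff[OF mult_carrier_mat[OF PK(1) Q(1)]]
  proof (intro allI impI)
    fix i j assume ij: "i < n" "j < n"
    have "0 < P $$ (i, a) * K $$ (a, b) * Q $$ (b, j)"
      using positive_matD[OF P(2,1) ij(1) ab(1)] positive_matD[OF Q(2,1) ab(2) ij(2)] \<open>0 < K $$ (a, b)\<close>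
      by simp
    also have "\<dots> \<le> (P * K) $$ (i, b) * Q $$ (b, j)"
      using mult_mat_entry_ge[OF P(1) K(1) positive_imp_nonneg_mat[OF P(2)] K(2) ij(1) ab(1,2)]
        positive_matD[OF Q(2,1) ab(2) ij(2)] by (intro mult_right_mono) auto
    also have "\<dots> \<le> (P * K * Q) $$ (i, j)"
      by (rule mult_mat_entry_ge[OF PK(1) Q(1) PK(2) positive_imp_nonneg_mat[OF Q(2)] ij(1) ab(2) ij(2)])
    finally show "0 < (P * K * Q) $$ (i, j)" .
  qed
qed

lemma mult_mat_vec_positive_entry:
  assumes F: "F \<in> carrier_mat n n" "nonneg_mat F" "F \<noteq> 0\<^sub>m n n"
    and u: "u \<in> carrier_vec n" "\<forall>i<n. 0 < u $ i"
  obtains p where "p < n" "0 < (F *\<^sub>v u) $ p"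
proof -
  obtain p q where pq: "p < n" "q < n" "F $$ (p, q) \<noteq> 0" using nonzero_mat_index[OF F(1,3)] .
  then have "0 < F $$ (p, q)" using nonneg_matD[OF F(2,1) pq(1,2)] by linarith
  then have "0 < F $$ (p, q) * u $ q" using u(2) pq(2) by simp
  also have "\<dots> \<le> (F *\<^sub>v u) $ p"
    using pq F u positive_vecD(1)[OF u] by (intro mult_mat_vec_entry_ge[of _ n n]) auto
  finally show ?thesis using that pq(1) by blast
qed

section \<open>Spectral radius\<close>

lemma rho_eigenvalue:
  assumes "X \<in> carrier_mat n n" "0 < n"
  obtains k where "eigenvalue (cmat X) k" "cmod k = rho X"
  using spectral_radius_mem_max(1)[of "cmat X" n] assms unfolding rho_def spectrum_def by auto

lemma eigenvalue_norm_le_rho: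
  assumes X: "X \<in> carrier_mat n n" and k: "eigenvalue (cmat X) k"
  shows "cmod k \<le> rho X"
proof -
  have "0 < n"
    using k X by (cases n) (auto simp: eigenvalue_def eigenvector_def)
  with X k show ?thesis
    using spectral_radius_mem_max(2)[of "cmat X" n] unfolding rho_def spectrum_def by auto
qed

lemma rho_nonneg: "X \<in> carrier_mat n n \<Longrightarrow> 0 < n \<Longrightarrow> 0 \<le> rho X"
  by (metis norm_ge_zero rho_eigenvalue)

lemma rho_smult_le:
  assumes X: "X \<in> carrier_mat n n" and "0 < n" "0 < a"
  shows "rho (a \<cdot>\<^sub>m X) \<le> a * rho X"
proof -
  have aX: "a \<cdot>\<^sub>m X \<in> carrier_mat n n" using X by simp
  obtain k where "eigenvalue (cmat (a \<cdot>\<^sub>m X)) k" and k: "cmod k = rho (a \<cdot>\<^sub>m X)"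
    using rho_eigenvalue[OF aX \<open>0 < n\<close>] .
  then obtain z where z: "z \<in> carrier_vec n" "z \<noteq> 0\<^sub>v n" "cmat (a \<cdot>\<^sub>m X) *\<^sub>v z = k \<cdot>\<^sub>v z"
    using X by (auto simp: eigenvalue_def eigenvector_def)
  have "cmat X = complex_of_real (1 / a) \<cdot>\<^sub>m cmat (a \<cdot>\<^sub>m X)"
    using \<open>0 < a\<close> by (intro eq_matI) auto
  then have "cmat X *\<^sub>v z = (complex_of_real (1 / a) * k) \<cdot>\<^sub>v z"
    using z X by (simp add: smult_mult_mat_vec[of _ n n] smult_smult_assoc)
  with z X have "eigenvalue (cmat X) (complex_of_real (1 / a) * k)"
    by (auto simp: eigenvalue_def eigenvector_def)
  from eigenvalue_norm_le_rho[OF X this] have "cmod k / a \<le> rho X"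
    using \<open>0 < a\<close> by (simp add: norm_mult norm_divide)
  then show ?thesis using \<open>0 < a\<close> k by (simp add: divide_le_eq mult.commute)
qed

lemma rho_transpose: "X \<in> carrier_mat n n \<Longrightarrow> rho (transpose_mat X) = rho X"
  unfolding rho_def spectral_radius_def map_mat_transpose[symmetric]
  by (simp add: spectrum_root_char_poly[of _ n])

text \<open>The Jordan normal form bounds the powers of a matrix of spectral radius below 1; rescaling by
  \<open>q\<close> turns this into decay at rate \<open>q\<close>.\<close>

lemma pow_mat_entries_bound:
  assumes X: "X \<in> carrier_mat n n" and "rho X < q" "0 < q"
  obtains C where "\<And>k i j. i < n \<Longrightarrow> j < n \<Longrightarrow> \<bar>(X ^\<^sub>m k) $$ (i, j)\<bar> \<le> C * q ^ k"
proof (cases "n = 0")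
  case False
  define Y where "Y = (1 / q) \<cdot>\<^sub>m X"
  have Y: "Y \<in> carrier_mat n n" using X unfolding Y_def by simp
  have "rho Y \<le> 1 / q * rho X"
    using rho_smult_le[OF X, of "1 / q"] False \<open>0 < q\<close> unfolding Y_def by simp
  also have "\<dots> < 1" using assms by (simp add: field_simps)
  finally have "spectral_radius (cmat Y) < 1" unfolding rho_def .
  then obtain C where C: "\<And>k. norm_bound (cmat Y ^\<^sub>m k) C"
    using spectral_radius_jnf_norm_bound_less_1_upper_triangular[of "cmat Y" n] Y by auto
  show ?thesis
  proof
    fix k i j assume ij: "i < n" "j < n"
    have "cmat Y ^\<^sub>m k = cmat (Y ^\<^sub>m k)" by (rule of_real_hom.mat_hom_pow[OF Y, symmetric])
    with C[of k] ij Y have "norm (cmat (Y ^\<^sub>m k) $$ (i, j)) \<le> C" unfolding norm_bound_def by auto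
    then have "\<bar>(Y ^\<^sub>m k) $$ (i, j)\<bar> \<le> C" using ij Y by simp
    moreover have "Y ^\<^sub>m k = (1 / q) ^ k \<cdot>\<^sub>m X ^\<^sub>m k" unfolding Y_def by (rule pow_mat_smult[OF X])
    ultimately have "\<bar>(X ^\<^sub>m k) $$ (i, j)\<bar> / q ^ k \<le> C"
      using ij X \<open>0 < q\<close> by (simp add: power_one_over abs_mult)
    then show "\<bar>(X ^\<^sub>m k) $$ (i, j)\<bar> \<le> C * q ^ k"
      using \<open>0 < q\<close> by (simp add: divide_le_eq)
  qed
qed simp

section \<open>Subinvariant and superinvariant vectors\<close>

lemma eigenvector_modulus_superinvariant:
  assumes X: "X \<in> carrier_mat n n" and "nonneg_mat X" and z: "eigenvector (cmat X) z k"
  shows "cmod k \<cdot>\<^sub>v vec n (\<lambda>i. cmod (z $ i)) \<le> X *\<^sub>v vec n (\<lambda>i. cmod (z $ i))"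
proof (rule less_eq_vecI[of _ n])
  fix i assume i: "i < n"
  have zc: "z \<in> carrier_vec n" and ev: "cmat X *\<^sub>v z = k \<cdot>\<^sub>v z"
    using z X by (auto simp: eigenvector_def)
  have "cmod k * cmod (z $ i) = cmod ((cmat X *\<^sub>v z) $ i)"
    using ev i zc by (simp add: norm_mult)
  also have "\<dots> = cmod (\<Sum>j = 0..<n. complex_of_real (X $$ (i, j)) * z $ j)"
    using i X zc by (simp add: index_mult_mat_vec_sum[of _ n n] del: index_mult_mat_vec)
  also have "\<dots> \<le> (\<Sum>j = 0..<n. cmod (complex_of_real (X $$ (i, j)) * z $ j))"
    by (rule norm_sum)
  also have "\<dots> = (\<Sum>j = 0..<n. X $$ (i, j) * cmod (z $ j))"
    using i assms nonneg_matD[of X n n] by (intro sum.cong) (auto simp: norm_mult)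
  also have "\<dots> = (X *\<^sub>v vec n (\<lambda>i. cmod (z $ i))) $ i"
    using i X by (simp add: index_mult_mat_vec_sum[of _ n n] del: index_mult_mat_vec)
  finally show "(cmod k \<cdot>\<^sub>v vec n (\<lambda>i. cmod (z $ i))) $ i \<le> (X *\<^sub>v vec n (\<lambda>i. cmod (z $ i))) $ i"
    using i by simp
qed (use X in auto)

lemma nonneg_eigenvector:
  assumes X: "X \<in> carrier_mat n n" and "nonneg_mat X" "0 < n"
  obtains v where "v \<in> carrier_vec n" "0\<^sub>v n \<le> v" "v \<noteq> 0\<^sub>v n" "rho X \<cdot>\<^sub>v v \<le> X *\<^sub>v v"
proof -
  obtain k z where k: "cmod k = rho X" and z: "eigenvector (cmat X) z k"
    using rho_eigenvalue[OF X \<open>0 < n\<close>] unfolding eigenvalue_def by metis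
  have zc: "z \<in> carrier_vec n" "z \<noteq> 0\<^sub>v n" using z X by (auto simp: eigenvector_def)
  obtain i where "i < n" "z $ i \<noteq> 0" using nonzero_vec_index[OF zc] .
  then have "vec n (\<lambda>i. cmod (z $ i)) \<noteq> 0\<^sub>v n"
    by (metis index_vec index_zero_vec(1) norm_eq_zero)
  moreover have "0\<^sub>v n \<le> vec n (\<lambda>i. cmod (z $ i))" by (intro nonneg_vecI) auto
  ultimately show ?thesis
    using that[of "vec n (\<lambda>i. cmod (z $ i))"] eigenvector_modulus_superinvariant[OF assms(1,2) z] k
    by auto
qed

lemma rho_le_if_subinvariant:
  assumes X: "X \<in> carrier_mat n n" and "nonneg_mat X" "0 < n"
    and v: "v \<in> carrier_vec n" "\<forall>i<n. 0 < v $ i" and Xv: "X *\<^sub>v v \<le> c \<cdot>\<^sub>v v"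
  shows "rho X \<le> c"
proof -
  obtain k z where k: "cmod k = rho X" and z: "eigenvector (cmat X) z k"
    using rho_eigenvalue[OF X \<open>0 < n\<close>] unfolding eigenvalue_def by metis
  have zc: "z \<in> carrier_vec n" "z \<noteq> 0\<^sub>v n" using z X by (auto simp: eigenvector_def)
  define a where "a = vec n (\<lambda>i. cmod (z $ i))"
  have a: "a \<in> carrier_vec n" unfolding a_def by simp
  define t where "t = Max ((\<lambda>i. a $ i / v $ i) ` {..<n})"
  have "t \<in> (\<lambda>i. a $ i / v $ i) ` {..<n}"
    unfolding t_def using \<open>0 < n\<close> by (intro Max_in) auto
  then obtain i0 where i0: "i0 < n" "t = a $ i0 / v $ i0" by auto
  have ratio_le: "a $ i / v $ i \<le> t" if "i < n" for i
    unfolding t_def using that by (intro Max_ge) auto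
  obtain i where i: "i < n" "z $ i \<noteq> 0" using nonzero_vec_index[OF zc] .
  have "0 < a $ i / v $ i" using i v unfolding a_def by simp
  with ratio_le[OF i(1)] have "0 < t" by linarith
  have "a \<le> t \<cdot>\<^sub>v v"
    using ratio_le v by (intro less_eq_vecI[OF a]) (auto simp: divide_le_eq mult.commute)
  have "rho X \<cdot>\<^sub>v a \<le> X *\<^sub>v a"
    using eigenvector_modulus_superinvariant[OF assms(1,2) z] k unfolding a_def by simp
  also have "\<dots> \<le> X *\<^sub>v (t \<cdot>\<^sub>v v)"
    using \<open>a \<le> t \<cdot>\<^sub>v v\<close> assms a by (intro mult_mat_vec_mono[of _ n n]) auto
  also have "\<dots> = t \<cdot>\<^sub>v (X *\<^sub>v v)" using X v by (simp add: mult_mat_vec)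
  finally have "(rho X \<cdot>\<^sub>v a) $ i0 \<le> (t \<cdot>\<^sub>v (X *\<^sub>v v)) $ i0"
    using X v i0 by (intro less_eq_vecD[of _ _ n]) auto
  then have "rho X * a $ i0 \<le> t * (X *\<^sub>v v) $ i0"
    using X v a i0 by simp
  also have "\<dots> \<le> t * (c * v $ i0)"
    using less_eq_vecD[OF Xv _ i0(1)] v i0 \<open>0 < t\<close> by (intro mult_left_mono) auto
  also have "\<dots> = c * a $ i0" using i0 v(2) by (simp add: less_imp_neq[symmetric])
  finally have "rho X * a $ i0 \<le> c * a $ i0" .
  moreover have "0 < v $ i0" using v(2) i0(1) by blast
  then have "0 < a $ i0" using \<open>0 < t\<close> i0(2) by (simp add: zero_less_divide_iff)
  ultimately show ?thesis by (rule mult_right_le_imp_le)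
qed

lemma pow_mat_superinvariant:
  assumes X: "X \<in> carrier_mat n n" and "nonneg_mat X" "0 \<le> c"
    and v: "v \<in> carrier_vec n" and Xv: "c \<cdot>\<^sub>v v \<le> X *\<^sub>v v"
  shows "c ^ k \<cdot>\<^sub>v v \<le> X ^\<^sub>m k *\<^sub>v v"
proof (induct k)
  case 0
  show ?case using X v by simp
next
  case (Suc k)
  have Xk: "X ^\<^sub>m k \<in> carrier_mat n n" "nonneg_mat (X ^\<^sub>m k)"
    using assms by (auto intro: nonneg_mat_pow)
  have "c ^ Suc k \<cdot>\<^sub>v v = c \<cdot>\<^sub>v (c ^ k \<cdot>\<^sub>v v)" by (simp add: smult_smult_assoc)
  also have "\<dots> \<le> c \<cdot>\<^sub>v (X ^\<^sub>m k *\<^sub>v v)" by (rule smult_vec_mono[OF \<open>0 \<le> c\<close> Suc])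
  also have "\<dots> = X ^\<^sub>m k *\<^sub>v (c \<cdot>\<^sub>v v)" using Xk v by (simp add: mult_mat_vec)
  also have "\<dots> \<le> X ^\<^sub>m k *\<^sub>v (X *\<^sub>v v)"
    using Xk X v Xv by (intro mult_mat_vec_mono[of _ n n]) auto
  also have "\<dots> = X ^\<^sub>m Suc k *\<^sub>v v" using assoc_mult_mat_vec[OF Xk(1) X v] by simp
  finally show ?case .
qed

lemma rho_ge_if_superinvariant:
  assumes X: "X \<in> carrier_mat n n" and "nonneg_mat X"
    and v: "v \<in> carrier_vec n" "0\<^sub>v n \<le> v" "v \<noteq> 0\<^sub>v n" and Xv: "c \<cdot>\<^sub>v v \<le> X *\<^sub>v v"
  shows "c \<le> rho X"
proof (rule ccontr)
  assume "\<not> c \<le> rho X"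
  obtain p where p: "p < n" "v $ p \<noteq> 0" using nonzero_vec_index[OF v(1,3)] .
  then have "0 < v $ p" using nonneg_vecD[OF v(2)] by force
  have "0 \<le> rho X" using rho_nonneg[OF X] p by simp
  define q where "q = (rho X + c) / 2"
  have q: "rho X < q" "0 < q" "q < c"
    using \<open>\<not> c \<le> rho X\<close> \<open>0 \<le> rho X\<close> unfolding q_def by auto
  obtain C where C: "\<And>k i j. i < n \<Longrightarrow> j < n \<Longrightarrow> \<bar>(X ^\<^sub>m k) $$ (i, j)\<bar> \<le> C * q ^ k"
    using pow_mat_entries_bound[OF X q(1,2)] by blast
  define S where "S = (\<Sum>j = 0..<n. v $ j)"
  have growth: "(c / q) ^ k \<le> C * S / v $ p" for k
  proof -
    have "c ^ k * v $ p \<le> (X ^\<^sub>m k *\<^sub>v v) $ p"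
      using less_eq_vecD[OF pow_mat_superinvariant[OF assms(1,2) _ v(1) Xv, of k]
          mult_mat_vec_carrier[OF pow_carrier_mat[OF X] v(1)] p(1)] q X v p
      by simp
    also have "\<dots> = (\<Sum>j = 0..<n. (X ^\<^sub>m k) $$ (p, j) * v $ j)"
      using X v p by (simp add: index_mult_mat_vec_sum[of _ n n] del: index_mult_mat_vec)
    also have "\<dots> \<le> (\<Sum>j = 0..<n. C * q ^ k * v $ j)"
      using C p nonneg_vecD[OF v(2)]
      by (intro sum_mono mult_right_mono) (auto intro: order_trans[OF abs_ge_self])
    also have "\<dots> = C * S * q ^ k" unfolding S_def by (simp add: sum_distrib_left ac_simps)
    finally have "c ^ k * v $ p \<le> C * S * q ^ k" .
    then show ?thesis
      using \<open>0 < v $ p\<close> q by (simp add: power_divide field_simps)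
  qed
  obtain k where "C * S / v $ p < (c / q) ^ k"
    using real_arch_pow[of "c / q"] q by auto
  with growth[of k] show False by simp
qed

lemma diag_le_rho:
  assumes X: "X \<in> carrier_mat n n" and "nonneg_mat X" "i < n"
  shows "X $$ (i, i) \<le> rho X"
proof (rule rho_ge_if_superinvariant[OF assms(1,2) unit_vec_carrier])
  show "0\<^sub>v n \<le> (unit_vec n i :: real vec)" by (rule nonneg_vecI) (use \<open>i < n\<close> in auto)
  show "unit_vec n i \<noteq> 0\<^sub>v n" using \<open>i < n\<close> by simp
  show "X $$ (i, i) \<cdot>\<^sub>v unit_vec n i \<le> X *\<^sub>v unit_vec n i"
    using assms nonneg_matD[of X n n] by (intro less_eq_vecI[of _ n]) (auto simp: mult_unit_vec_eq_col)
qed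

lemma rho_gt_if_strictly_superinvariant:
  assumes X: "X \<in> carrier_mat n n" and "nonneg_mat X"
    and v: "v \<in> carrier_vec n" "\<forall>i<n. 0 < v $ i" and g: "g \<in> carrier_vec n" "\<forall>i<n. 0 < g $ i"
    and ineq: "c \<cdot>\<^sub>v v + g \<le> X *\<^sub>v v" and "0 < n"
  shows "c < rho X"
proof -
  define d where "d = Min ((\<lambda>i. g $ i / v $ i) ` {..<n})"
  have "d \<in> (\<lambda>i. g $ i / v $ i) ` {..<n}" unfolding d_def using \<open>0 < n\<close> by (intro Min_in) auto
  then have "0 < d" using v g by auto
  have "(c + d) \<cdot>\<^sub>v v \<le> X *\<^sub>v v"
  proof (rule less_eq_vecI[of _ n])
    fix i assume i: "i < n"
    have "d \<le> g $ i / v $ i" unfolding d_def using i by (intro Min_le) auto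
    then have "d * v $ i \<le> g $ i" using v i by (simp add: le_divide_eq)
    moreover have "c * v $ i + g $ i \<le> (X *\<^sub>v v) $ i"
      using less_eq_vecD[OF ineq _ i] X v g i by simp
    ultimately show "((c + d) \<cdot>\<^sub>v v) $ i \<le> (X *\<^sub>v v) $ i" using i v by (simp add: distrib_right)
  qed (use X v in auto)
  moreover have "0\<^sub>v n \<le> v" "v \<noteq> 0\<^sub>v n" using positive_vecD[OF v \<open>0 < n\<close>] by auto
  ultimately have "c + d \<le> rho X" using rho_ge_if_superinvariant[OF X assms(2) v(1)] by blast
  with \<open>0 < d\<close> show ?thesis by simp
qed

lemma rho_gt_1_no_positive_left_subinvariant:
  assumes X: "X \<in> carrier_mat n n" and "nonneg_mat X" "0 < n" "1 < rho X"
  shows "\<not> (\<exists>w :: real vec. dim_vec w = n \<and> (\<forall>j<n. w $ j > 0)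
              \<and> (\<forall>j<n. (transpose_mat (1\<^sub>m n - X) *\<^sub>v w) $ j \<ge> 0))"
proof
  assume "\<exists>w :: real vec. dim_vec w = n \<and> (\<forall>j<n. w $ j > 0)
              \<and> (\<forall>j<n. (transpose_mat (1\<^sub>m n - X) *\<^sub>v w) $ j \<ge> 0)"
  then obtain w :: "real vec" where w: "dim_vec w = n" "\<forall>j<n. 0 < w $ j"
    and sub: "\<forall>j<n. 0 \<le> (transpose_mat (1\<^sub>m n - X) *\<^sub>v w) $ j" by blast
  have wc: "w \<in> carrier_vec n" using w(1) by (rule carrier_vecI)
  have Xt: "transpose_mat X \<in> carrier_mat n n" "nonneg_mat (transpose_mat X)"
    using X nonneg_matD[OF assms(2) X] by (auto simp: nonneg_mat_def)
  have "transpose_mat (1\<^sub>m n - X) *\<^sub>v w = 1\<^sub>m n *\<^sub>v w - transpose_mat X *\<^sub>v w"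
    using transpose_minus[OF one_carrier_mat X] minus_mult_distrib_mat_vec[OF one_carrier_mat Xt(1) wc]
    by simp
  then have "(transpose_mat X *\<^sub>v w) $ j \<le> w $ j" if "j < n" for j
    using sub that wc Xt(1) by (simp del: index_mult_mat_vec)
  then have "transpose_mat X *\<^sub>v w \<le> 1 \<cdot>\<^sub>v w" using Xt(1) wc by (intro less_eq_vecI[of _ n]) auto
  then have "rho (transpose_mat X) \<le> 1" by (rule rho_le_if_subinvariant[OF Xt \<open>0 < n\<close> wc w(2)])
  with rho_transpose[OF X] \<open>1 < rho X\<close> show False by simp
qed

lemma nonneg_if_subinvariant:
  assumes X: "X \<in> carrier_mat n n" and "nonneg_mat X" "rho X < 1"
    and u: "u \<in> carrier_vec n" and Xu: "X *\<^sub>v u \<le> u"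
  shows "0\<^sub>v n \<le> u"
proof (rule ccontr)
  define w where "w = vec n (\<lambda>i. max 0 (- u $ i))"
  have w: "w \<in> carrier_vec n" "0\<^sub>v n \<le> w" unfolding w_def by (auto intro: nonneg_vecI)
  assume "\<not> 0\<^sub>v n \<le> u"
  then obtain i where "i < n" "u $ i < 0" using u by (auto simp: less_eq_vec_def not_le)
  then have "w $ i \<noteq> 0" unfolding w_def by simp
  with \<open>i < n\<close> have "w \<noteq> 0\<^sub>v n" by auto
  have "1 \<cdot>\<^sub>v w \<le> X *\<^sub>v w"
  proof (rule less_eq_vecI[of _ n])
    fix i assume i: "i < n"
    have "0 \<le> (\<Sum>j = 0..<n. X $$ (i, j) * (w $ j + u $ j))"
      using assms i nonneg_matD[of X n n] unfolding w_def by (intro sum_nonneg) auto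
    also have "\<dots> = (X *\<^sub>v w) $ i + (X *\<^sub>v u) $ i"
      using X w u i by (simp add: index_mult_mat_vec_sum[of _ n n] sum.distrib algebra_simps
          del: index_mult_mat_vec)
    finally have "- (X *\<^sub>v u) $ i \<le> (X *\<^sub>v w) $ i" by simp
    moreover have "(X *\<^sub>v u) $ i \<le> u $ i" using less_eq_vecD[OF Xu u i] .
    moreover have "0 \<le> (X *\<^sub>v w) $ i" using mult_mat_vec_nonneg[OF X w(1) assms(2) w(2)] i
      by (auto dest: nonneg_vecD)
    ultimately show "(1 \<cdot>\<^sub>v w) $ i \<le> (X *\<^sub>v w) $ i" using i unfolding w_def by auto
  qed (use X w in auto)
  from rho_ge_if_superinvariant[OF assms(1,2) w \<open>w \<noteq> 0\<^sub>v n\<close> this] \<open>rho X < 1\<close>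
  show False by simp
qed

lemma one_minus_solution_ge:
  assumes X: "X \<in> carrier_mat n n" and "nonneg_mat X" "rho X < 1"
    and y: "y \<in> carrier_vec n" and b: "0\<^sub>v n \<le> b" and sol: "(1\<^sub>m n - X) *\<^sub>v y = b"
  shows "b \<le> y"
proof -
  have bc: "b \<in> carrier_vec n" unfolding sol[symmetric] by (rule mult_mat_vec_carrier[OF minus_carrier_mat[OF X] y])
  from sol have "y - X *\<^sub>v y = b" using X y by (simp add: minus_mult_distrib_mat_vec[of _ n n])
  then have Xy: "(X *\<^sub>v y) $ k = y $ k - b $ k" if "k < n" for k
  proof -
    from \<open>y - X *\<^sub>v y = b\<close> have "(y - X *\<^sub>v y) $ k = b $ k" by simp
    then show ?thesis using X y that by simp
  qed
  have "0\<^sub>v n \<le> y"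
    using Xy nonneg_vecD[OF b] X y
    by (intro nonneg_if_subinvariant[OF assms(1-3) y] less_eq_vecI[of _ n]) auto
  then have "0\<^sub>v n \<le> X *\<^sub>v y" by (rule mult_mat_vec_nonneg[OF X y assms(2)])
  then show "b \<le> y" using Xy bc y by (intro less_eq_vecI[of _ n]) (auto dest: nonneg_vecD)
qed

lemma one_minus_inverse_ge_one:
  assumes X: "X \<in> carrier_mat n n" and "nonneg_mat X" "rho X < 1"
  obtains Y where "mat_inverse (1\<^sub>m n - X) = Some Y" "Y \<in> carrier_mat n n"
    "(1\<^sub>m n - X) * Y = 1\<^sub>m n" "Y * (1\<^sub>m n - X) = 1\<^sub>m n" "1\<^sub>m n \<le> Y"
proof -
  have R: "1\<^sub>m n - X \<in> carrier_mat n n" using minus_carrier_mat[OF X] .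
  have "v = 0\<^sub>v n" if v: "v \<in> carrier_vec n" "(1\<^sub>m n - X) *\<^sub>v v = 0\<^sub>v n" for v
  proof -
    have "(1\<^sub>m n - X) *\<^sub>v ((-1) \<cdot>\<^sub>v v) = (-1) \<cdot>\<^sub>v ((1\<^sub>m n - X) *\<^sub>v v)"
      by (rule mult_mat_vec[OF R v(1)])
    also have "\<dots> = 0\<^sub>v n" unfolding v(2) by (intro eq_vecI) auto
    finally have "(1\<^sub>m n - X) *\<^sub>v ((-1) \<cdot>\<^sub>v v) = 0\<^sub>v n" .
    then have "0\<^sub>v n \<le> (-1) \<cdot>\<^sub>v v"
      using v(1) by (intro one_minus_solution_ge[OF assms _ order.refl]) auto
    moreover have "0\<^sub>v n \<le> v" by (rule one_minus_solution_ge[OF assms v(1) order.refl v(2)])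
    ultimately show ?thesis using v by (intro eq_vecI) (auto simp: less_eq_vec_def intro!: order.antisym)
  qed
  then have "det (1\<^sub>m n - X) \<noteq> 0" using det_0_iff_vec_prod_zero_field[OF R] by blast
  then have "1\<^sub>m n - X \<in> Units (ring_mat TYPE(real) n ())" by (rule det_non_zero_imp_unit[OF R])
  then obtain Y where Y: "mat_inverse (1\<^sub>m n - X) = Some Y"
    using mat_inverse(1)[OF R, of "()"] by (cases "mat_inverse (1\<^sub>m n - X)") auto
  with mat_inverse(2)[OF R Y] have Yc: "Y \<in> carrier_mat n n" and
    inv: "(1\<^sub>m n - X) * Y = 1\<^sub>m n" "Y * (1\<^sub>m n - X) = 1\<^sub>m n" by auto
  have "1\<^sub>m n \<le> Y"
  proof (rule less_eq_matI[of _ n n])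
    fix i j assume ij: "i < n" "j < n"
    have col: "col Y j \<in> carrier_vec n" using Yc unfolding carrier_vec_def by simp
    moreover have "0\<^sub>v n \<le> (unit_vec n j :: real vec)" by (rule nonneg_vecI) (use ij in auto)
    moreover have "(1\<^sub>m n - X) *\<^sub>v col Y j = unit_vec n j"
      using col_mult2[OF R Yc ij(2)] inv(1) ij(2) by simp
    ultimately have "unit_vec n j \<le> col Y j" by (rule one_minus_solution_ge[OF assms])
    from less_eq_vecD[OF this col ij(1)] show "1\<^sub>m n $$ (i, j) \<le> Y $$ (i, j)" using ij Yc by simp
  qed (use Yc in auto)
  with Y Yc inv that show ?thesis by blast
qed

lemma rho_lt_1_test_vector:
  assumes X: "X \<in> carrier_mat n n" and "nonneg_mat X" "rho X < 1"
  obtains v where "v \<in> carrier_vec n" "\<And>i. i < n \<Longrightarrow> 1 \<le> v $ i" "\<And>i. i < n \<Longrightarrow> (X *\<^sub>v v) $ i = v $ i - 1"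
proof -
  obtain R where R: "R \<in> carrier_mat n n" "(1\<^sub>m n - X) * R = 1\<^sub>m n"
    using one_minus_inverse_ge_one[OF assms] by blast
  define e where "e = vec n (\<lambda>_. 1 :: real)"
  have e: "e \<in> carrier_vec n" "0\<^sub>v n \<le> e" unfolding e_def by (auto intro: nonneg_vecI)
  define v where "v = R *\<^sub>v e"
  have v: "v \<in> carrier_vec n" unfolding v_def by (rule mult_mat_vec_carrier[OF R(1) e(1)])
  have "(1\<^sub>m n - X) *\<^sub>v v = ((1\<^sub>m n - X) * R) *\<^sub>v e"
    unfolding v_def using R X e by (intro assoc_mult_mat_vec[symmetric, of _ n n _ n]) auto
  also have "\<dots> = e" using R(2) e by simp
  finally have sol: "(1\<^sub>m n - X) *\<^sub>v v = e" .
  have "e \<le> v" by (rule one_minus_solution_ge[OF assms v e(2) sol])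
  then have "1 \<le> v $ i" if "i < n" for i using less_eq_vecD[OF _ v that] that unfolding e_def by force
  moreover from sol have "v - X *\<^sub>v v = e" using X v by (simp add: minus_mult_distrib_mat_vec[of _ n n])
  then have "(X *\<^sub>v v) $ i = v $ i - 1" if "i < n" for i
  proof -
    from \<open>v - X *\<^sub>v v = e\<close> have "(v - X *\<^sub>v v) $ i = e $ i" by simp
    then show ?thesis using X v that unfolding e_def by simp
  qed
  ultimately show ?thesis using that v by blast
qed

section \<open>Irreducible matrices\<close>

lemma irreducible_mat_mono:
  assumes A: "A \<in> carrier_mat n n" and B: "B \<in> carrier_mat n n"
    and "nonneg_mat A" "A \<le> B" and irr: "irreducible_mat A"
  shows "irreducible_mat B"
proof -
  have "B $$ (a, b) \<noteq> 0" if "a < n" "b < n" "A $$ (a, b) \<noteq> 0" for a b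
    using nonneg_matD[OF assms(3) A that(1,2)] less_eq_matD[OF assms(4) B that(1,2)] that(3) by linarith
  then have "{(a, b). a < n \<and> b < n \<and> A $$ (a, b) \<noteq> 0} \<subseteq> {(a, b). a < n \<and> b < n \<and> B $$ (a, b) \<noteq> 0}"
    by auto
  then show ?thesis
    using irr A B unfolding irreducible_mat_def by (auto dest: trancl_mono)
qed

lemma positive_imp_irreducible:
  assumes "X \<in> carrier_mat n n" "positive_mat X"
  shows "irreducible_mat X"
  unfolding irreducible_mat_def
proof (intro allI impI)
  fix i j assume ij: "i < dim_row X" "j < dim_row X"
  with assms have "0 < X $$ (i, j)" by (auto simp: positive_mat_def)
  with ij show "(i, j) \<in> {(a, b). a < dim_row X \<and> b < dim_row X \<and> X $$ (a, b) \<noteq> 0}\<^sup>+"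
    by (intro r_into_trancl) auto
qed

lemma irreducible_pow_entry_pos:
  assumes X: "X \<in> carrier_mat n n" and "nonneg_mat X" "irreducible_mat X" and ij: "i < n" "j < n"
  shows "\<exists>k. 0 < (X ^\<^sub>m k) $$ (i, j)"
proof -
  have edge: "0 < X $$ (a, b)" if "(a, b) \<in> {(a, b). a < n \<and> b < n \<and> X $$ (a, b) \<noteq> 0}" for a b
    using that nonneg_matD[OF assms(2,1)] by fastforce
  have "(i, j) \<in> {(a, b). a < n \<and> b < n \<and> X $$ (a, b) \<noteq> 0}\<^sup>+"
    using assms unfolding irreducible_mat_def by auto
  then show ?thesis
  proof (induct rule: trancl_induct)
    case (base b)
    then show ?case using edge[OF base] X by (intro exI[of _ 1]) simp
  next
    case (step b c)
    then obtain k where k: "0 < (X ^\<^sub>m k) $$ (i, b)" by blast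
    have bc: "b < n" "c < n" using step(2) by auto
    have "0 < (X ^\<^sub>m k) $$ (i, b) * X $$ (b, c)" using k edge[OF step(2)] by simp
    also have "\<dots> \<le> (X ^\<^sub>m k * X) $$ (i, c)"
      by (rule mult_mat_entry_ge[of _ n n]) (use assms bc in \<open>auto intro: nonneg_mat_pow\<close>)
    also have "\<dots> = (X ^\<^sub>m Suc k) $$ (i, c)" by simp
    finally show ?case by blast
  qed
qed

lemma irreducible_pow_lower_bound:
  assumes X: "X \<in> carrier_mat n n" and "nonneg_mat X" "irreducible_mat X"
  obtains \<gamma> where "0 < \<gamma>" "\<And>i j. i < n \<Longrightarrow> j < n \<Longrightarrow> \<exists>k. \<gamma> \<le> (X ^\<^sub>m k) $$ (i, j)"
proof -
  define kf where "kf i j = (SOME k. 0 < (X ^\<^sub>m k) $$ (i, j))" for i j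
  have kf: "0 < (X ^\<^sub>m kf i j) $$ (i, j)" if "i < n" "j < n" for i j
    unfolding kf_def by (rule someI_ex[OF irreducible_pow_entry_pos[OF assms that]])
  define \<gamma> where "\<gamma> = Min (insert 1 ((\<lambda>(i, j). (X ^\<^sub>m kf i j) $$ (i, j)) ` ({..<n} \<times> {..<n})))"
  show ?thesis
  proof
    show "0 < \<gamma>" unfolding \<gamma>_def using kf by (subst Min_gr_iff) auto
    fix i j assume "i < n" "j < n"
    then have "\<gamma> \<le> (X ^\<^sub>m kf i j) $$ (i, j)" unfolding \<gamma>_def by (intro Min_le) auto
    then show "\<exists>k. \<gamma> \<le> (X ^\<^sub>m k) $$ (i, j)" by blast
  qed
qed

lemma irreducible_row_entries_comparable:
  assumes A: "A \<in> carrier_mat n n" and "nonneg_mat A" "irreducible_mat A"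
  obtains \<gamma> where "0 < \<gamma>"
    "\<And>X N i j k. X \<in> carrier_mat n n \<Longrightarrow> N \<in> carrier_mat n n \<Longrightarrow> A \<le> X \<Longrightarrow> nonneg_mat N \<Longrightarrow>
      N * X \<le> N \<Longrightarrow> i < n \<Longrightarrow> j < n \<Longrightarrow> k < n \<Longrightarrow> \<gamma> * N $$ (i, j) \<le> N $$ (i, k)"
proof -
  obtain \<gamma> where \<gamma>: "0 < \<gamma>" "\<And>j k. j < n \<Longrightarrow> k < n \<Longrightarrow> \<exists>b. \<gamma> \<le> (A ^\<^sub>m b) $$ (j, k)"
    using irreducible_pow_lower_bound[OF assms] by blast
  show ?thesis
  proof (rule that[OF \<gamma>(1)])
    fix X N i j k
    assume X: "X \<in> carrier_mat n n" and N: "N \<in> carrier_mat n n" and "A \<le> X" "nonneg_mat N"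
      and NX: "N * X \<le> N" and ijk: "i < n" "j < n" "k < n"
    have "nonneg_mat X" by (rule nonneg_mat_mono[OF A X assms(2) \<open>A \<le> X\<close>])
    obtain b where "\<gamma> \<le> (A ^\<^sub>m b) $$ (j, k)" using \<gamma>(2)[OF ijk(2,3)] by blast
    also have "\<dots> \<le> (X ^\<^sub>m b) $$ (j, k)"
      using pow_mat_mono[OF A X assms(2) \<open>A \<le> X\<close>] X ijk by (intro less_eq_matD[of _ _ n n]) auto
    finally have "\<gamma> * N $$ (i, j) \<le> (X ^\<^sub>m b) $$ (j, k) * N $$ (i, j)"
      by (rule mult_right_mono) (rule nonneg_matD[OF \<open>nonneg_mat N\<close> N ijk(1,2)])
    also have "\<dots> = N $$ (i, j) * (X ^\<^sub>m b) $$ (j, k)" by (rule mult.commute)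
    also have "\<dots> \<le> (N * X ^\<^sub>m b) $$ (i, k)"
      using N X ijk \<open>nonneg_mat N\<close> \<open>nonneg_mat X\<close> by (intro mult_mat_entry_ge[of _ n n] nonneg_mat_pow) auto
    also have "\<dots> \<le> N $$ (i, k)"
      using mult_pow_le[OF X N \<open>nonneg_mat X\<close> NX, of b] N ijk by (intro less_eq_matD[of _ _ n n]) auto
    finally show "\<gamma> * N $$ (i, j) \<le> N $$ (i, k)" .
  qed
qed

lemma pow_le_one_plus_pow:
  assumes X: "X \<in> carrier_mat n n" and "nonneg_mat X"
  shows "k \<le> m \<Longrightarrow> X ^\<^sub>m k \<le> (1\<^sub>m n + X) ^\<^sub>m m"
proof (induct m arbitrary: k)
  case 0
  then show ?case using X by simp
next
  case (Suc m)
  define C where "C = (1\<^sub>m n + X) ^\<^sub>m m"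
  have C: "C \<in> carrier_mat n n" "nonneg_mat C"
    unfolding C_def using assms by (auto intro!: nonneg_mat_pow nonneg_mat_add[of _ n n] nonneg_mat_one)
  have CX: "nonneg_mat (C * X)" using C assms by (intro nonneg_mat_mult[of _ n n]) auto
  have "(1\<^sub>m n + X) ^\<^sub>m Suc m = C * (1\<^sub>m n + X)" unfolding C_def by simp
  also have "\<dots> = C * 1\<^sub>m n + C * X" by (rule mult_add_distrib_mat[OF C(1) one_carrier_mat X])
  finally have eq: "(1\<^sub>m n + X) ^\<^sub>m Suc m = C + C * X" using C(1) by simp
  show ?case
  proof (cases "k \<le> m")
    case True
    have "X ^\<^sub>m k \<le> C" using Suc(1)[OF True] unfolding C_def .
    also have "C \<le> C + C * X" using C CX X by (intro le_add_nonneg_mat) auto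
    finally show ?thesis unfolding eq .
  next
    case False
    then have k: "k = Suc m" using Suc(2) by simp
    have "X ^\<^sub>m m \<le> C" using Suc(1)[of m] unfolding C_def by simp
    then have "X ^\<^sub>m m * X \<le> C * X"
      using X C assms by (intro mult_mat_mono_right[of _ n n]) auto
    also have "C * X \<le> C * X + C" using C CX X by (intro le_add_nonneg_mat) auto
    also have "\<dots> = C + C * X" using C X by (intro comm_add_mat[of _ n n]) auto
    finally show ?thesis unfolding eq k by simp
  qed
qed

lemma irreducible_one_plus_pow_positive:
  assumes X: "X \<in> carrier_mat n n" and "nonneg_mat X" "irreducible_mat X"
  obtains m where "positive_mat ((1\<^sub>m n + X) ^\<^sub>m m)"
proof -
  define kf where "kf i j = (SOME k. 0 < (X ^\<^sub>m k) $$ (i, j))" for i j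
  have kf: "0 < (X ^\<^sub>m kf i j) $$ (i, j)" if "i < n" "j < n" for i j
    unfolding kf_def by (rule someI_ex[OF irreducible_pow_entry_pos[OF assms that]])
  define m where "m = Max ((\<lambda>(i, j). kf i j) ` ({..<n} \<times> {..<n}))"
  have "0 < ((1\<^sub>m n + X) ^\<^sub>m m) $$ (i, j)" if ij: "i < n" "j < n" for i j
  proof -
    have "kf i j \<le> m" unfolding m_def using ij by (intro Max_ge) auto
    have "0 < (X ^\<^sub>m kf i j) $$ (i, j)" using kf[OF ij] .
    also have "\<dots> \<le> ((1\<^sub>m n + X) ^\<^sub>m m) $$ (i, j)"
      using pow_le_one_plus_pow[OF assms(1,2) \<open>kf i j \<le> m\<close>] X ij by (intro less_eq_matD[of _ _ n n]) auto
    finally show ?thesis .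
  qed
  then show ?thesis
    using that positive_mat_iff[OF pow_carrier_mat[OF add_carrier_mat[OF X]]] by blast
qed

lemma one_plus_pow_commute:
  fixes X :: "'a :: semiring_1 mat"
  assumes X: "X \<in> carrier_mat n n"
  shows "(1\<^sub>m n + X) ^\<^sub>m k * X = X * (1\<^sub>m n + X) ^\<^sub>m k"
proof (induct k)
  case (Suc k)
  define C where "C = (1\<^sub>m n + X) ^\<^sub>m k"
  have C: "C \<in> carrier_mat n n" unfolding C_def using X by simp
  have "(1\<^sub>m n + X) * X = 1\<^sub>m n * X + X * X" by (rule add_mult_distrib_mat[OF one_carrier_mat X X])
  also have "\<dots> = X * 1\<^sub>m n + X * X" using X by simp
  also have "\<dots> = X * (1\<^sub>m n + X)" by (rule mult_add_distrib_mat[OF X one_carrier_mat X, symmetric])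
  finally have comm: "(1\<^sub>m n + X) * X = X * (1\<^sub>m n + X)" .
  have "C * (1\<^sub>m n + X) * X = C * ((1\<^sub>m n + X) * X)" using C X by (simp add: assoc_mult_mat[of _ n n _ n _ n])
  also have "\<dots> = (C * X) * (1\<^sub>m n + X)" unfolding comm using C X by (simp add: assoc_mult_mat[of _ n n _ n _ n])
  also have "\<dots> = X * (C * (1\<^sub>m n + X))" using Suc C X unfolding C_def by (simp add: assoc_mult_mat[of _ n n _ n _ n])
  finally show ?case unfolding C_def by simp
qed (use X in simp)

lemma superinvariant_mult_commuting:
  assumes X: "X \<in> carrier_mat n n" and P: "P \<in> carrier_mat n n" "nonneg_mat P" "P * X = X * P"
    and v: "v \<in> carrier_vec n" and g: "g \<in> carrier_vec n" and ineq: "c \<cdot>\<^sub>v v + g \<le> X *\<^sub>v v"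
  shows "c \<cdot>\<^sub>v (P *\<^sub>v v) + P *\<^sub>v g \<le> X *\<^sub>v (P *\<^sub>v v)"
proof -
  have "c \<cdot>\<^sub>v (P *\<^sub>v v) + P *\<^sub>v g = P *\<^sub>v (c \<cdot>\<^sub>v v + g)"
    using P v g by (simp add: mult_add_distrib_mat_vec[of _ n n] mult_mat_vec)
  also have "\<dots> \<le> P *\<^sub>v (X *\<^sub>v v)" using P X v g ineq by (intro mult_mat_vec_mono[of _ n n]) auto
  also have "\<dots> = (P * X) *\<^sub>v v" by (rule assoc_mult_mat_vec[OF P(1) X v, symmetric])
  also have "\<dots> = X *\<^sub>v (P *\<^sub>v v)" unfolding P(3) by (rule assoc_mult_mat_vec[OF X P(1) v])
  finally show ?thesis .
qed

lemma irreducible_perron_vector: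
  assumes X: "X \<in> carrier_mat n n" and "nonneg_mat X" "irreducible_mat X" "0 < n"
  obtains u where "u \<in> carrier_vec n" "\<forall>i<n. 0 < u $ i" "rho X \<cdot>\<^sub>v u \<le> X *\<^sub>v u"
proof -
  obtain v where v: "v \<in> carrier_vec n" "0\<^sub>v n \<le> v" "v \<noteq> 0\<^sub>v n" "rho X \<cdot>\<^sub>v v \<le> X *\<^sub>v v"
    using nonneg_eigenvector[OF assms(1,2,4)] .
  obtain m where m: "positive_mat ((1\<^sub>m n + X) ^\<^sub>m m)"
    using irreducible_one_plus_pow_positive[OF assms(1-3)] .
  define P where "P = (1\<^sub>m n + X) ^\<^sub>m m"
  have P: "P \<in> carrier_mat n n" "positive_mat P" "P * X = X * P"
    using m X one_plus_pow_commute[OF X] unfolding P_def by auto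
  have "rho X \<cdot>\<^sub>v (P *\<^sub>v v) + P *\<^sub>v 0\<^sub>v n \<le> X *\<^sub>v (P *\<^sub>v v)"
    using v by (intro superinvariant_mult_commuting[OF X P(1) positive_imp_nonneg_mat[OF P(2)] P(3)]) auto
  then have "rho X \<cdot>\<^sub>v (P *\<^sub>v v) \<le> X *\<^sub>v (P *\<^sub>v v)" using P(1) v(1) by (simp add: mult_mat_vec_zero)
  moreover have "\<forall>i<n. 0 < (P *\<^sub>v v) $ i" using positive_mult_mat_vec_pos[OF P(1,2) v(1-3)] by blast
  ultimately show ?thesis using that[OF mult_mat_vec_carrier[OF P(1) v(1)]] by blast
qed

lemma irreducible_rho_gt_if_superinvariant:
  assumes X: "X \<in> carrier_mat n n" and "nonneg_mat X" "irreducible_mat X"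
    and v: "v \<in> carrier_vec n" "\<forall>i<n. 0 < v $ i"
    and g: "g \<in> carrier_vec n" "0\<^sub>v n \<le> g" "g \<noteq> 0\<^sub>v n" and ineq: "c \<cdot>\<^sub>v v + g \<le> X *\<^sub>v v"
  shows "c < rho X"
proof -
  have "0 < n" using g by (cases n) auto
  obtain m where m: "positive_mat ((1\<^sub>m n + X) ^\<^sub>m m)"
    using irreducible_one_plus_pow_positive[OF assms(1-3)] .
  define P where "P = (1\<^sub>m n + X) ^\<^sub>m m"
  have P: "P \<in> carrier_mat n n" "positive_mat P" "P * X = X * P"
    using m X one_plus_pow_commute[OF X] unfolding P_def by auto
  have v0: "0\<^sub>v n \<le> v" "v \<noteq> 0\<^sub>v n" using positive_vecD[OF v \<open>0 < n\<close>] by auto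
  show ?thesis
  proof (rule rho_gt_if_strictly_superinvariant[OF X assms(2) _ _ _ _ _ \<open>0 < n\<close>])
    show "c \<cdot>\<^sub>v (P *\<^sub>v v) + P *\<^sub>v g \<le> X *\<^sub>v (P *\<^sub>v v)"
      by (rule superinvariant_mult_commuting[OF X P(1) positive_imp_nonneg_mat[OF P(2)] P(3) v(1) g(1) ineq])
    show "\<forall>i<n. 0 < (P *\<^sub>v v) $ i" using positive_mult_mat_vec_pos[OF P(1,2) v(1) v0] by blast
    show "\<forall>i<n. 0 < (P *\<^sub>v g) $ i" using positive_mult_mat_vec_pos[OF P(1,2) g] by blast
  qed (use P v g in auto)
qed

lemma rho_strict_mono_irreducible:
  assumes X: "X \<in> carrier_mat n n" and "nonneg_mat X" "irreducible_mat X"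
    and F: "F \<in> carrier_mat n n" "nonneg_mat F" "F \<noteq> 0\<^sub>m n n" and "0 < a"
  shows "rho X < rho (X + a \<cdot>\<^sub>m F)"
proof -
  have "0 < n" using F by (cases n) auto
  obtain u where u: "u \<in> carrier_vec n" "\<forall>i<n. 0 < u $ i" "rho X \<cdot>\<^sub>v u \<le> X *\<^sub>v u"
    using irreducible_perron_vector[OF assms(1-3) \<open>0 < n\<close>] .
  have Y: "X + a \<cdot>\<^sub>m F \<in> carrier_mat n n" "X \<le> X + a \<cdot>\<^sub>m F"
    using assms nonneg_matD[OF F(2,1)] by (auto intro!: less_eq_matI[of _ n n])
  have "nonneg_mat (X + a \<cdot>\<^sub>m F)" by (rule nonneg_mat_mono[OF X Y(1) assms(2) Y(2)])
  have u0: "0\<^sub>v n \<le> u" using u by (intro nonneg_vecI) (auto simp: less_imp_le)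
  have Fu: "0\<^sub>v n \<le> F *\<^sub>v u" by (rule mult_mat_vec_nonneg[OF F(1) u(1) F(2) u0])
  obtain p where p: "p < n" "0 < (F *\<^sub>v u) $ p"
    using mult_mat_vec_positive_entry[OF F u(1,2)] .
  then have "(a \<cdot>\<^sub>v (F *\<^sub>v u)) $ p \<noteq> 0" using F u \<open>0 < a\<close> by simp
  then have "a \<cdot>\<^sub>v (F *\<^sub>v u) \<noteq> 0\<^sub>v n" using p(1) by auto
  show ?thesis
  proof (rule irreducible_rho_gt_if_superinvariant[OF Y(1) \<open>nonneg_mat (X + a \<cdot>\<^sub>m F)\<close>
        irreducible_mat_mono[OF X Y(1) assms(2) Y(2) assms(3)] u(1,2)])
    show "0\<^sub>v n \<le> a \<cdot>\<^sub>v (F *\<^sub>v u)"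
      using nonneg_vecD[OF Fu] \<open>0 < a\<close> F u by (intro nonneg_vecI[of _ n]) auto
    have "(X + a \<cdot>\<^sub>m F) *\<^sub>v u = X *\<^sub>v u + a \<cdot>\<^sub>v (F *\<^sub>v u)"
      using X F u by (simp add: add_mult_distrib_mat_vec[of _ n n] smult_mult_mat_vec[of _ n n])
    then show "rho X \<cdot>\<^sub>v u + a \<cdot>\<^sub>v (F *\<^sub>v u) \<le> (X + a \<cdot>\<^sub>m F) *\<^sub>v u"
      using less_eq_vecD[OF u(3)] X F u by (auto simp: less_eq_vec_def)
  qed (use \<open>a \<cdot>\<^sub>v (F *\<^sub>v u) \<noteq> 0\<^sub>v n\<close> F u in auto)
qed

section \<open>Crossing the level 1\<close>

lemma rho_lt_1_stable:
  assumes X: "X \<in> carrier_mat n n" and "nonneg_mat X" "rho X < 1"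
    and F: "F \<in> carrier_mat n n" "nonneg_mat F" and "0 < n"
  obtains \<epsilon> where "0 < \<epsilon>"
    "\<And>a Y. Y \<in> carrier_mat n n \<Longrightarrow> nonneg_mat Y \<Longrightarrow> 0 \<le> a \<Longrightarrow> a \<le> \<epsilon> \<Longrightarrow> Y \<le> X + a \<cdot>\<^sub>m F \<Longrightarrow>
      rho Y < 1"
proof -
  obtain v where v: "v \<in> carrier_vec n" and v1: "\<And>i. i < n \<Longrightarrow> 1 \<le> v $ i"
    and Xv: "\<And>i. i < n \<Longrightarrow> (X *\<^sub>v v) $ i = v $ i - 1"
    using rho_lt_1_test_vector[OF assms(1-3)] by blast
  have v_pos: "\<forall>i<n. 0 < v $ i"
  proof (intro allI impI)
    fix i assume "i < n"
    from v1[OF this] show "0 < v $ i" by linarith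
  qed
  have Fv: "0 \<le> (F *\<^sub>v v) $ i" if "i < n" for i
    using nonneg_vecD[OF mult_mat_vec_nonneg[OF F(1) v F(2) positive_vecD(1)[OF v v_pos \<open>0 < n\<close>]] that] .
  obtain \<Phi> where "0 < \<Phi>" and Fv_le: "\<And>i. i < n \<Longrightarrow> (F *\<^sub>v v) $ i \<le> \<Phi>"
    using vec_upper_bound by blast
  obtain V where "0 < V" and v_le: "\<And>i. i < n \<Longrightarrow> v $ i \<le> V" using vec_upper_bound by blast
  show ?thesis
  proof (rule that)
    show "0 < 1 / (2 * \<Phi>)" using \<open>0 < \<Phi>\<close> by simp
    fix a Y assume Y: "Y \<in> carrier_mat n n" "nonneg_mat Y" and a: "0 \<le> a" "a \<le> 1 / (2 * \<Phi>)"
      and YX: "Y \<le> X + a \<cdot>\<^sub>m F"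
    have "Y *\<^sub>v v \<le> (1 - 1 / (2 * V)) \<cdot>\<^sub>v v"
    proof (rule less_eq_vecI[of _ n])
      fix i assume i: "i < n"
      have "(Y *\<^sub>v v) $ i \<le> ((X + a \<cdot>\<^sub>m F) *\<^sub>v v) $ i"
        using mult_mat_vec_mono_mat[OF Y(1) _ v YX] X F v v_pos i
        by (intro less_eq_vecD[of _ _ n] mult_mat_vec_carrier[of _ n n]) (auto intro: nonneg_vecI[OF v] less_imp_le)
      also have "\<dots> = v $ i - 1 + a * (F *\<^sub>v v) $ i"
        using X F v i Xv by (simp add: add_mult_distrib_mat_vec[of _ n n] smult_mult_mat_vec[of _ n n]
            del: index_mult_mat_vec)
      also have "a * (F *\<^sub>v v) $ i \<le> 1 / (2 * \<Phi>) * \<Phi>"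
        using a Fv[OF i] Fv_le[OF i] by (intro mult_mono) auto
      also have "1 / (2 * \<Phi>) * \<Phi> = 1 / 2" using \<open>0 < \<Phi>\<close> by simp
      also have "v $ i - 1 + 1 / 2 \<le> (1 - 1 / (2 * V)) * v $ i"
        using v_le[OF i] v1[OF i] \<open>0 < V\<close> by (simp add: field_simps)
      finally show "(Y *\<^sub>v v) $ i \<le> ((1 - 1 / (2 * V)) \<cdot>\<^sub>v v) $ i" using i v by simp
    qed (use Y v in auto)
    then have "rho Y \<le> 1 - 1 / (2 * V)"
      by (rule rho_le_if_subinvariant[OF Y \<open>0 < n\<close> v v_pos])
    moreover have "0 < 1 / (2 * V)" using \<open>0 < V\<close> by simp
    ultimately show "rho Y < 1" by linarith
  qed
qed

lemma rho_gt_1_stable: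
  assumes X: "X \<in> carrier_mat n n" and "nonneg_mat X" "irreducible_mat X" "1 < rho X"
    and F: "F \<in> carrier_mat n n" "nonneg_mat F" and "0 < n"
  obtains \<epsilon> where "0 < \<epsilon>"
    "\<And>a Y. Y \<in> carrier_mat n n \<Longrightarrow> nonneg_mat Y \<Longrightarrow> 0 \<le> a \<Longrightarrow> a \<le> \<epsilon> \<Longrightarrow> X \<le> Y + a \<cdot>\<^sub>m F \<Longrightarrow>
      1 < rho Y"
proof -
  obtain w where w: "w \<in> carrier_vec n" "\<forall>i<n. 0 < w $ i" "rho X \<cdot>\<^sub>v w \<le> X *\<^sub>v w"
    using irreducible_perron_vector[OF assms(1-3) \<open>0 < n\<close>] .
  have w0: "0\<^sub>v n \<le> w" "w \<noteq> 0\<^sub>v n" using positive_vecD[OF w(1,2) \<open>0 < n\<close>] by auto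
  obtain m where "0 < m" and m_le: "\<And>i. i < n \<Longrightarrow> m \<le> w $ i"
    using positive_vec_lower_bound[OF w(2) \<open>0 < n\<close>] by blast
  have Fw: "0 \<le> (F *\<^sub>v w) $ i" if "i < n" for i
    using mult_mat_vec_nonneg[OF F(1) w(1) F(2) w0(1)] that by (auto dest: nonneg_vecD)
  obtain \<Phi> where "0 < \<Phi>" and Fw_le: "\<And>i. i < n \<Longrightarrow> (F *\<^sub>v w) $ i \<le> \<Phi>"
    using vec_upper_bound by blast
  define \<epsilon> where "\<epsilon> = (rho X - 1) * m / (2 * \<Phi>)"
  show ?thesis
  proof (rule that)
    show "0 < \<epsilon>" unfolding \<epsilon>_def using \<open>0 < \<Phi>\<close> \<open>0 < m\<close> \<open>1 < rho X\<close> by simp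
    fix a Y assume Y: "Y \<in> carrier_mat n n" "nonneg_mat Y" and a: "0 \<le> a" "a \<le> \<epsilon>"
      and XY: "X \<le> Y + a \<cdot>\<^sub>m F"
    have "(rho X + 1) / 2 \<cdot>\<^sub>v w \<le> Y *\<^sub>v w"
    proof (rule less_eq_vecI[of _ n])
      fix i assume i: "i < n"
      have "rho X * w $ i \<le> (X *\<^sub>v w) $ i" using less_eq_vecD[OF w(3) _ i] X w i by simp
      also have "\<dots> \<le> ((Y + a \<cdot>\<^sub>m F) *\<^sub>v w) $ i"
        using mult_mat_vec_mono_mat[OF X _ w(1) XY w0(1)] Y F w(1) i
        by (intro less_eq_vecD[of _ _ n] mult_mat_vec_carrier[of _ n n]) auto
      also have "\<dots> = (Y *\<^sub>v w) $ i + a * (F *\<^sub>v w) $ i"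
        using Y F w i by (simp add: add_mult_distrib_mat_vec[of _ n n] smult_mult_mat_vec[of _ n n]
            del: index_mult_mat_vec)
      also have "a * (F *\<^sub>v w) $ i \<le> \<epsilon> * \<Phi>"
        using a Fw[OF i] Fw_le[OF i] by (intro mult_mono) auto
      also have "\<epsilon> * \<Phi> = (rho X - 1) / 2 * m" unfolding \<epsilon>_def using \<open>0 < \<Phi>\<close> by simp
      also have "\<dots> \<le> (rho X - 1) / 2 * w $ i" using m_le[OF i] \<open>1 < rho X\<close> by simp
      finally show "((rho X + 1) / 2 \<cdot>\<^sub>v w) $ i \<le> (Y *\<^sub>v w) $ i" using i w by (simp add: field_simps)
    qed (use Y w in auto)
    then have "(rho X + 1) / 2 \<le> rho Y" by (rule rho_ge_if_superinvariant[OF Y w(1) w0])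
    then show "1 < rho Y" using \<open>1 < rho X\<close> by simp
  qed
qed

text \<open>The one-sided openness hypotheses on the sublevel set \<open>{f < 1}\<close> and the superlevel set
  \<open>{f > 1}\<close> stand in for continuity of \<open>f\<close>.\<close>

lemma strict_mono_crosses_one:
  fixes f :: "real \<Rightarrow> real"
  assumes mono: "\<And>r s. 0 \<le> r \<Longrightarrow> r < s \<Longrightarrow> s < b \<Longrightarrow> f r < f s"
    and "0 < b" "f 0 < 1"
    and up: "\<And>s. 0 \<le> s \<Longrightarrow> s < b \<Longrightarrow> f s < 1 \<Longrightarrow> \<exists>r. s < r \<and> r < b \<and> f r < 1"
    and down: "\<And>s. 0 < s \<Longrightarrow> s < b \<Longrightarrow> 1 < f s \<Longrightarrow> \<exists>r. 0 \<le> r \<and> r < s \<and> 1 < f r"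
    and big: "\<exists>r. 0 \<le> r \<and> r < b \<and> 1 < f r"
  obtains c where "0 < c" "c < b" "f c = 1"
    "\<And>r. 0 \<le> r \<Longrightarrow> r < c \<Longrightarrow> f r < 1" "\<And>r. c < r \<Longrightarrow> r < b \<Longrightarrow> 1 < f r"
proof -
  define S where "S = {r. 0 \<le> r \<and> r < b \<and> f r < 1}"
  obtain r1 where r1: "0 \<le> r1" "r1 < b" "1 < f r1" using big by blast
  have below_r1: "x < r1" if "x \<in> S" for x
  proof (rule ccontr)
    assume "\<not> x < r1"
    then have "f r1 \<le> f x" using that mono[of r1 x] r1 unfolding S_def by (cases "x = r1") auto
    with that r1 show False unfolding S_def by auto
  qed
  have "0 \<in> S" unfolding S_def using assms by auto
  moreover have "bdd_above S" using below_r1 by (meson bdd_aboveI less_imp_le)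
  ultimately have S: "S \<noteq> {}" "bdd_above S" by auto
  define c where "c = Sup S"
  have "c \<le> r1" unfolding c_def using S below_r1 by (meson cSup_least less_imp_le)
  then have "c < b" using r1 by simp
  have upper: "x \<le> c" if "x \<in> S" for x unfolding c_def using cSup_upper[OF that S(2)] .
  obtain r0 where "0 < r0" "r0 < b" "f r0 < 1" using up[of 0] \<open>0 < b\<close> \<open>f 0 < 1\<close> by auto
  then have "0 < c" using upper[of r0] unfolding S_def by fastforce
  have "f c = 1"
  proof (rule ccontr)
    assume "f c \<noteq> 1"
    then consider "f c < 1" | "1 < f c" by linarith
    then show False
    proof cases
      case 1
      then obtain r where "c < r" "r < b" "f r < 1" using up[of c] \<open>0 < c\<close> \<open>c < b\<close> by auto
      with upper[of r] \<open>0 < c\<close> show False unfolding S_def by fastforce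
    next
      case 2
      then obtain r where r: "0 \<le> r" "r < c" "1 < f r" using down[of c] \<open>0 < c\<close> \<open>c < b\<close> by auto
      then obtain x where "x \<in> S" "r < x" using less_cSup_iff[OF S] unfolding c_def by auto
      with mono[of r x] r show False unfolding S_def by auto
    qed
  qed
  show ?thesis
  proof (rule that[OF \<open>0 < c\<close> \<open>c < b\<close> \<open>f c = 1\<close>])
    show "f r < 1" if "0 \<le> r" "r < c" for r using mono[of r c] that \<open>c < b\<close> \<open>f c = 1\<close> by simp
    show "1 < f r" if "c < r" "r < b" for r using mono[of c r] that \<open>0 < c\<close> \<open>f c = 1\<close> by simp
  qed
qed

section \<open>The family of matrices M r\<close>

text \<open>\<open>At\<close> is the paper's \<open>A + D\<close>.  The standing hypothesis \<open>rho At < 1\<close> is not assumed: it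
  follows from the others (lemma \<open>rho_T_lt_1\<close>).\<close>

locale standing_assumptions =
  fixes n :: nat and At K B :: "real mat" and l :: "nat \<Rightarrow> real" and rA :: real
  assumes n: "0 < n"
    and At: "At \<in> carrier_mat n n" and K: "K \<in> carrier_mat n n" and B: "B \<in> carrier_mat n n"
    and At_nonneg: "nonneg_mat At" and K_nonneg: "nonneg_mat K" and B_nonneg: "nonneg_mat B"
    and K_nonzero: "K \<noteq> 0\<^sub>m n n"
    and l_pos: "\<forall>j<n. 0 < l j"
    and B_cols: "\<forall>j<n. \<exists>i<n. B $$ (i, j) \<noteq> 0"
    and At_irreducible: "irreducible_mat At"
    and rA_pos: "0 < rA" and rho_rA: "rho (At + rA \<cdot>\<^sub>m K) = 1"

begin

definition T :: "real \<Rightarrow> real mat" where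
  "T r = At + r \<cdot>\<^sub>m K"

definition N :: "real \<Rightarrow> real mat" where
  "N r = the (mat_inverse (1\<^sub>m n - T r))"

abbreviation L :: "real mat" where
  "L \<equiv> mat_diag n l"

definition M :: "real \<Rightarrow> real mat" where
  "M r = Mmat n L At K B r"

lemma T_carrier: "T r \<in> carrier_mat n n"
  unfolding T_def using At K by simp

lemma At_le_T: "0 \<le> r \<Longrightarrow> At \<le> T r"
  unfolding T_def using At K nonneg_matD[OF K_nonneg K] by (intro le_add_nonneg_mat) (auto simp: nonneg_mat_def)

lemma T_nonneg: "0 \<le> r \<Longrightarrow> nonneg_mat (T r)"
  using nonneg_mat_mono[OF At T_carrier At_nonneg At_le_T] .

lemma T_irreducible: "0 \<le> r \<Longrightarrow> irreducible_mat (T r)"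
  using irreducible_mat_mono[OF At T_carrier At_nonneg At_le_T At_irreducible] .

lemma T_shift: "T s = T r + (s - r) \<cdot>\<^sub>m K"
  unfolding T_def using At K by (intro eq_matI) (auto simp: algebra_simps)

lemma rho_T_lt_1: "0 \<le> r \<Longrightarrow> r < rA \<Longrightarrow> rho (T r) < 1"
  using rho_strict_mono_irreducible[OF T_carrier T_nonneg T_irreducible K K_nonneg K_nonzero, of r "rA - r"]
    rho_rA T_shift[of rA r] unfolding T_def by simp

lemma N_inverse:
  assumes "0 \<le> r" "r < rA"
  shows "N r \<in> carrier_mat n n" "(1\<^sub>m n - T r) * N r = 1\<^sub>m n" "N r * (1\<^sub>m n - T r) = 1\<^sub>m n"
    "1\<^sub>m n \<le> N r"
proof -
  obtain Y where "mat_inverse (1\<^sub>m n - T r) = Some Y" "Y \<in> carrier_mat n n"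
    "(1\<^sub>m n - T r) * Y = 1\<^sub>m n" "Y * (1\<^sub>m n - T r) = 1\<^sub>m n" "1\<^sub>m n \<le> Y"
    using one_minus_inverse_ge_one[OF T_carrier T_nonneg rho_T_lt_1] assms by blast
  then show "N r \<in> carrier_mat n n" "(1\<^sub>m n - T r) * N r = 1\<^sub>m n" "N r * (1\<^sub>m n - T r) = 1\<^sub>m n"
    "1\<^sub>m n \<le> N r" unfolding N_def by auto
qed

lemma N_nonneg: "0 \<le> r \<Longrightarrow> r < rA \<Longrightarrow> nonneg_mat (N r)"
  using nonneg_mat_mono[OF one_carrier_mat N_inverse(1) nonneg_mat_one N_inverse(4)] .

lemma N_mult_T_le: assumes "0 \<le> r" "r < rA" shows "N r * T r \<le> N r"
proof -
  note N = N_inverse[OF assms]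
  have "N r * (1\<^sub>m n - T r) = N r * 1\<^sub>m n - N r * T r"
    by (rule mult_minus_distrib_mat[OF N(1) one_carrier_mat T_carrier])
  with N(1,3) have eq: "N r - N r * T r = 1\<^sub>m n" by simp
  show ?thesis
  proof (rule less_eq_matI[of _ n n])
    fix i j assume ij: "i < n" "j < n"
    have "N r $$ (i, j) - (N r * T r) $$ (i, j) = (N r - N r * T r) $$ (i, j)"
      using ij N(1) T_carrier[of r] by (intro index_minus_mat(1)[symmetric]) auto
    also have "\<dots> = 1\<^sub>m n $$ (i, j)" using eq by simp
    finally show "(N r * T r) $$ (i, j) \<le> N r $$ (i, j)" using ij by (auto split: if_splits)
  qed (use N(1) T_carrier in auto)
qed

lemma N_shift:
  assumes r: "0 \<le> r" "r < rA" and s: "0 \<le> s" "s < rA"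
  shows "N s = N r + (s - r) \<cdot>\<^sub>m (N s * K * N r)"
proof -
  note Nr = N_inverse[OF r] and Ns = N_inverse[OF s]
  have R: "1\<^sub>m n - T r \<in> carrier_mat n n" "1\<^sub>m n - T s \<in> carrier_mat n n"
    using T_carrier by (auto intro: minus_carrier_mat)
  have sK: "(s - r) \<cdot>\<^sub>m K \<in> carrier_mat n n" using K by simp
  have split: "1\<^sub>m n - T r = (1\<^sub>m n - T s) + (s - r) \<cdot>\<^sub>m K"
    unfolding T_def using At K by (intro eq_matI) (auto simp: algebra_simps)
  have "N s = N s * ((1\<^sub>m n - T r) * N r)" using Nr(2) Ns(1) by simp
  also have "\<dots> = N s * (1\<^sub>m n - T r) * N r" using assoc_mult_mat[OF Ns(1) R(1) Nr(1)] by simp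
  also have "N s * (1\<^sub>m n - T r) = N s * (1\<^sub>m n - T s) + N s * ((s - r) \<cdot>\<^sub>m K)"
    unfolding split by (rule mult_add_distrib_mat[OF Ns(1) R(2) sK])
  also have "\<dots> = 1\<^sub>m n + (s - r) \<cdot>\<^sub>m (N s * K)" using Ns(1,3) K by (simp add: mult_smult_distrib)
  also have "(1\<^sub>m n + (s - r) \<cdot>\<^sub>m (N s * K)) * N r = N r + (s - r) \<cdot>\<^sub>m (N s * K * N r)"
    using Ns(1) Nr(1) K by (simp add: add_mult_distrib_mat[of _ n n] mult_smult_assoc_mat[of _ n n])
  finally show ?thesis .
qed

lemma NKN_carrier:
  assumes "0 \<le> r" "r < rA" "0 \<le> s" "s < rA"
  shows "N s * K * N r \<in> carrier_mat n n"
  using mult_carrier_mat[OF mult_carrier_mat[OF N_inverse(1)[OF assms(3,4)] K] N_inverse(1)[OF assms(1,2)]] .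

lemma NKN_nonneg:
  assumes "0 \<le> r" "r < rA" "0 \<le> s" "s < rA"
  shows "nonneg_mat (N s * K * N r)"
  using nonneg_mat_mult[OF mult_carrier_mat[OF N_inverse(1)[OF assms(3,4)] K] N_inverse(1)[OF assms(1,2)]
      nonneg_mat_mult[OF N_inverse(1)[OF assms(3,4)] K N_nonneg[OF assms(3,4)] K_nonneg]
      N_nonneg[OF assms(1,2)]] .

lemma N_mono: assumes "0 \<le> r" "r \<le> s" "s < rA" shows "N r \<le> N s"
proof -
  have r: "0 \<le> r" "r < rA" and s: "0 \<le> s" "s < rA" using assms by auto
  have "N r \<le> N r + (s - r) \<cdot>\<^sub>m (N s * K * N r)"
    using N_inverse(1)[OF r] NKN_carrier[OF r s] NKN_nonneg[OF r s] assms
    by (intro le_add_nonneg_mat[of _ n n] nonneg_mat_smult) auto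
  then show ?thesis using N_shift[OF r s] by simp
qed

lemma NKN_mono:
  assumes "0 \<le> r" "r \<le> r'" "r' < rA" "0 \<le> s" "s \<le> s'" "s' < rA"
  shows "N r * K * N s \<le> N r' * K * N s'"
proof -
  have r: "0 \<le> r" "r < rA" and r': "0 \<le> r'" "r' < rA" and s: "0 \<le> s" "s < rA" and s': "0 \<le> s'" "s' < rA"
    using assms by auto
  note C = N_inverse(1)[OF r] N_inverse(1)[OF r'] N_inverse(1)[OF s] N_inverse(1)[OF s']
  have "N r * K * N s \<le> N r' * K * N s"
    using C K K_nonneg N_nonneg[OF s] N_mono[of r r'] assms
    by (intro mult_mat_mono_right[of _ n n] mult_mat_mono_right[of _ n n]) auto
  also have "\<dots> \<le> N r' * K * N s'"
    using C K K_nonneg N_nonneg[OF r'] N_mono[of s s'] assms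
    by (intro mult_mat_mono_left[of _ n n] nonneg_mat_mult[of _ n n]) auto
  finally show ?thesis .
qed

lemma N_rows_comparable:
  obtains \<gamma> where "0 < \<gamma>"
    "\<And>r i j k. 0 \<le> r \<Longrightarrow> r < rA \<Longrightarrow> i < n \<Longrightarrow> j < n \<Longrightarrow> k < n \<Longrightarrow> \<gamma> * N r $$ (i, j) \<le> N r $$ (i, k)"
proof -
  obtain \<gamma> where \<gamma>: "0 < \<gamma>"
    "\<And>X Y i j k. X \<in> carrier_mat n n \<Longrightarrow> Y \<in> carrier_mat n n \<Longrightarrow> At \<le> X \<Longrightarrow> nonneg_mat Y \<Longrightarrow>
      Y * X \<le> Y \<Longrightarrow> i < n \<Longrightarrow> j < n \<Longrightarrow> k < n \<Longrightarrow> \<gamma> * Y $$ (i, j) \<le> Y $$ (i, k)"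
    using irreducible_row_entries_comparable[OF At At_nonneg At_irreducible] by blast
  show ?thesis
  proof (rule that[OF \<gamma>(1)])
    fix r i j k assume "0 \<le> r" "r < rA" "i < n" "j < n" "k < n"
    then show "\<gamma> * N r $$ (i, j) \<le> N r $$ (i, k)"
      by (intro \<gamma>(2)[OF T_carrier N_inverse(1) At_le_T N_nonneg N_mult_T_le])
  qed
qed

lemma N_positive: assumes "0 \<le> r" "r < rA" shows "positive_mat (N r)"
proof -
  obtain \<gamma> where \<gamma>: "0 < \<gamma>"
    "\<And>r i j k. 0 \<le> r \<Longrightarrow> r < rA \<Longrightarrow> i < n \<Longrightarrow> j < n \<Longrightarrow> k < n \<Longrightarrow> \<gamma> * N r $$ (i, j) \<le> N r $$ (i, k)"
    using N_rows_comparable by blast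
  show ?thesis
    unfolding positive_mat_iff[OF N_inverse(1)[OF assms]]
  proof (intro allI impI)
    fix i k assume ik: "i < n" "k < n"
    have "1\<^sub>m n $$ (i, i) \<le> N r $$ (i, i)"
      by (rule less_eq_matD[OF N_inverse(4)[OF assms] N_inverse(1)[OF assms] ik(1) ik(1)])
    then have "1 \<le> N r $$ (i, i)" using ik by simp
    then have "0 < \<gamma> * N r $$ (i, i)" using \<gamma>(1) by simp
    also have "\<dots> \<le> N r $$ (i, k)" using \<gamma>(2) assms ik by blast
    finally show "0 < N r $$ (i, k)" .
  qed
qed

lemma L_nonneg: "nonneg_mat L"
  using l_pos by (auto simp: nonneg_mat_def mat_diag_def less_imp_le)

lemma LXB_carrier: "X \<in> carrier_mat n n \<Longrightarrow> L * X * B \<in> carrier_mat n n"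
  using mult_carrier_mat[OF mult_carrier_mat[OF mat_diag_dim] B] by blast

lemma LXB_nonneg:
  assumes "X \<in> carrier_mat n n" "nonneg_mat X"
  shows "nonneg_mat (L * X * B)"
  using nonneg_mat_mult[OF mult_carrier_mat[OF mat_diag_dim assms(1)] B
      nonneg_mat_mult[OF mat_diag_dim assms(1) L_nonneg assms(2)] B_nonneg] .

lemma LXB_positive:
  assumes "X \<in> carrier_mat n n" "positive_mat X"
  shows "positive_mat (L * X * B)"
  using positive_mat_mult_nonzero_cols[OF mult_carrier_mat[OF mat_diag_dim assms(1)]
      positive_mat_diag_mult[OF l_pos assms] B B_nonneg B_cols] .

lemma LXB_mono:
  assumes "X \<in> carrier_mat n n" "Y \<in> carrier_mat n n" "X \<le> Y"
  shows "L * X * B \<le> L * Y * B"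
  using mult_mat_mono_right[OF mult_carrier_mat[OF mat_diag_dim assms(1)]
      mult_carrier_mat[OF mat_diag_dim assms(2)] B B_nonneg
      mult_mat_mono_left[OF mat_diag_dim assms(1,2) L_nonneg assms(3)]] .

lemma M_eq: "M r = L * N r * B"
proof -
  have "1\<^sub>m n - At - r \<cdot>\<^sub>m K = 1\<^sub>m n - T r"
    unfolding T_def using At K by (intro eq_matI) auto
  then show ?thesis unfolding M_def Mmat_def N_def by simp
qed

lemma M_carrier: "0 \<le> r \<Longrightarrow> r < rA \<Longrightarrow> M r \<in> carrier_mat n n"
  unfolding M_eq by (rule LXB_carrier[OF N_inverse(1)])

lemma M_nonneg: "0 \<le> r \<Longrightarrow> r < rA \<Longrightarrow> nonneg_mat (M r)"
  unfolding M_eq by (rule LXB_nonneg[OF N_inverse(1) N_nonneg])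

lemma M_positive: "0 \<le> r \<Longrightarrow> r < rA \<Longrightarrow> positive_mat (M r)"
  unfolding M_eq by (rule LXB_positive[OF N_inverse(1) N_positive])

lemma M_shift:
  assumes "0 \<le> r" "r < rA" "0 \<le> s" "s < rA"
  shows "M s = M r + (s - r) \<cdot>\<^sub>m (L * (N s * K * N r) * B)"
proof -
  have "M s = L * (N r + (s - r) \<cdot>\<^sub>m (N s * K * N r)) * B"
    unfolding M_eq using N_shift[OF assms] by (rule arg_cong[where f = "\<lambda>X. L * X * B"])
  then show ?thesis
    unfolding mult_add_smult_mult[OF mat_diag_dim N_inverse(1)[OF assms(1,2)] NKN_carrier[OF assms] B]
      M_eq .
qed

lemma M_irreducible: "0 \<le> r \<Longrightarrow> r < rA \<Longrightarrow> irreducible_mat (M r)"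
  by (rule positive_imp_irreducible[OF M_carrier M_positive])

lemma M_entry_ge:
  assumes r: "0 \<le> r" "r < rA" and "i < n" "k < n" "j < n"
  shows "l i * N r $$ (i, k) * B $$ (k, j) \<le> M r $$ (i, j)"
proof -
  note Nr = N_inverse(1)[OF r]
  have LN: "L * N r \<in> carrier_mat n n" "nonneg_mat (L * N r)"
    using mult_carrier_mat[OF mat_diag_dim Nr] nonneg_mat_mult[OF mat_diag_dim Nr L_nonneg N_nonneg[OF r]]
    by auto
  have "l i * N r $$ (i, k) = (L * N r) $$ (i, k)" using Nr assms by (simp add: mat_diag_mult_left[of _ n n])
  also have "\<dots> * B $$ (k, j) \<le> M r $$ (i, j)"
    unfolding M_eq by (rule mult_mat_entry_ge[OF LN(1) B LN(2) B_nonneg assms(3-5)])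
  finally show ?thesis .
qed

lemma rho_M_strict_mono:
  assumes "0 \<le> r" "r < s" "s < rA"
  shows "rho (M r) < rho (M s)"
proof -
  have r: "0 \<le> r" "r < rA" and s: "0 \<le> s" "s < rA" using assms by auto
  define F where "F = L * (N s * K * N r) * B"
  have F: "F \<in> carrier_mat n n" "positive_mat F"
    unfolding F_def using LXB_carrier[OF NKN_carrier[OF r s]] LXB_positive[OF NKN_carrier[OF r s]
      positive_mat_mult_nonneg_mult[OF N_inverse(1)[OF s] N_positive[OF s] K K_nonneg K_nonzero
        N_inverse(1)[OF r] N_positive[OF r]]] by auto
  have "F \<noteq> 0\<^sub>m n n" using positive_matD[OF F(2,1) n n] n by auto
  from rho_strict_mono_irreducible[OF M_carrier[OF r] M_nonneg[OF r] M_irreducible[OF r]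
      F(1) positive_imp_nonneg_mat[OF F(2)] this, of "s - r"]
  show ?thesis using assms unfolding F_def M_shift[OF r s] by simp
qed

lemma rho_M_lt_1_extends_right:
  assumes s: "0 \<le> s" "s < rA" and lt: "rho (M s) < 1"
  obtains r where "s < r" "r < rA" "rho (M r) < 1"
proof -
  define t where "t = (s + rA) / 2"
  have t: "s < t" "t < rA" "0 \<le> t" using s unfolding t_def by auto
  define F where "F = L * (N t * K * N s) * B"
  have F: "F \<in> carrier_mat n n" "nonneg_mat F"
    unfolding F_def using LXB_carrier[OF NKN_carrier[OF s t(3,2)]] LXB_nonneg[OF NKN_carrier[OF s t(3,2)]
      NKN_nonneg[OF s t(3,2)]] by auto
  obtain \<epsilon> where \<epsilon>: "0 < \<epsilon>"
    "\<And>a Y. Y \<in> carrier_mat n n \<Longrightarrow> nonneg_mat Y \<Longrightarrow> 0 \<le> a \<Longrightarrow> a \<le> \<epsilon> \<Longrightarrow>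
      Y \<le> M s + a \<cdot>\<^sub>m F \<Longrightarrow> rho Y < 1"
    using rho_lt_1_stable[OF M_carrier[OF s] M_nonneg[OF s] lt F n] by blast
  define r where "r = s + min \<epsilon> (t - s)"
  have r: "s < r" "r \<le> t" "0 \<le> r" "r < rA" "r - s \<le> \<epsilon>"
    using \<open>0 < \<epsilon>\<close> t s unfolding r_def by auto
  have r': "0 \<le> r" "r < rA" using r by auto
  have "M r = M s + (r - s) \<cdot>\<^sub>m (L * (N r * K * N s) * B)" by (rule M_shift[OF s r'])
  also have "\<dots> \<le> M s + (r - s) \<cdot>\<^sub>m F"
  proof -
    have "N r * K * N s \<le> N t * K * N s" by (rule NKN_mono) (use r s t in auto)
    then have "L * (N r * K * N s) * B \<le> F"
      unfolding F_def by (rule LXB_mono[OF NKN_carrier[OF s r'] NKN_carrier[OF s t(3,2)]])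
    then show ?thesis
      using r by (intro add_smult_mono_mat[OF M_carrier[OF s] LXB_carrier[OF NKN_carrier[OF s r']] F(1)]) auto
  qed
  finally have "rho (M r) < 1" using r by (intro \<epsilon>(2)[OF M_carrier M_nonneg]) auto
  with r that show ?thesis by blast
qed

lemma rho_M_gt_1_extends_left:
  assumes s: "0 < s" "s < rA" and gt: "1 < rho (M s)"
  obtains r where "0 \<le> r" "r < s" "1 < rho (M r)"
proof -
  have s': "0 \<le> s" "s < rA" using s by auto
  define E where "E = L * (N s * K * N s) * B"
  have E: "E \<in> carrier_mat n n" "nonneg_mat E"
    unfolding E_def using LXB_carrier[OF NKN_carrier[OF s' s']] LXB_nonneg[OF NKN_carrier[OF s' s']
      NKN_nonneg[OF s' s']] by auto
  obtain \<epsilon> where \<epsilon>: "0 < \<epsilon>"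
    "\<And>a Y. Y \<in> carrier_mat n n \<Longrightarrow> nonneg_mat Y \<Longrightarrow> 0 \<le> a \<Longrightarrow> a \<le> \<epsilon> \<Longrightarrow>
      M s \<le> Y + a \<cdot>\<^sub>m E \<Longrightarrow> 1 < rho Y"
    using rho_gt_1_stable[OF M_carrier[OF s'] M_nonneg[OF s'] M_irreducible[OF s'] gt E n] by blast
  define r where "r = s - min \<epsilon> (s / 2)"
  have r: "0 \<le> r" "r < s" "r < rA" "s - r \<le> \<epsilon>"
    using \<open>0 < \<epsilon>\<close> s unfolding r_def by auto
  have r': "0 \<le> r" "r < rA" using r by auto
  have "M s = M r + (s - r) \<cdot>\<^sub>m (L * (N s * K * N r) * B)" by (rule M_shift[OF r' s'])
  also have "\<dots> \<le> M r + (s - r) \<cdot>\<^sub>m E"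
  proof -
    have "N s * K * N r \<le> N s * K * N s" by (rule NKN_mono) (use r s' in auto)
    then have "L * (N s * K * N r) * B \<le> E"
      unfolding E_def by (rule LXB_mono[OF NKN_carrier[OF r' s'] NKN_carrier[OF s' s']])
    then show ?thesis
      using r by (intro add_smult_mono_mat[OF M_carrier[OF r'] LXB_carrier[OF NKN_carrier[OF r' s']] E(1)]) auto
  qed
  finally have "1 < rho (M r)" using r by (intro \<epsilon>(2)[OF M_carrier M_nonneg]) auto
  with r that show ?thesis by blast
qed

lemma N_mult_K_ge:
  assumes r: "0 \<le> r" "r < rA" and u: "u \<in> carrier_vec n" "u \<le> T rA *\<^sub>v u"
  shows "u \<le> (rA - r) \<cdot>\<^sub>v (N r *\<^sub>v (K *\<^sub>v u))"
proof -
  note Nr = N_inverse[OF r]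
  have Tr: "T r \<in> carrier_mat n n" by (rule T_carrier)
  have sub: "u - T r *\<^sub>v u \<le> (rA - r) \<cdot>\<^sub>v (K *\<^sub>v u)"
  proof (rule less_eq_vecI[of _ n])
    fix i assume i: "i < n"
    have "u $ i \<le> (T rA *\<^sub>v u) $ i" using less_eq_vecD[OF u(2) mult_mat_vec_carrier[OF T_carrier u(1)] i] .
    also have "T rA *\<^sub>v u = T r *\<^sub>v u + (rA - r) \<cdot>\<^sub>v (K *\<^sub>v u)"
      unfolding T_shift[of rA r] using Tr K u(1)
      by (simp add: add_mult_distrib_mat_vec[of _ n n] smult_mult_mat_vec[of _ n n])
    finally show "(u - T r *\<^sub>v u) $ i \<le> ((rA - r) \<cdot>\<^sub>v (K *\<^sub>v u)) $ i"
      using i u(1) Tr K by simp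
  qed (use u(1) K Tr in auto)
  have "u = (N r * (1\<^sub>m n - T r)) *\<^sub>v u" using Nr(3) u(1) by simp
  also have "\<dots> = N r *\<^sub>v ((1\<^sub>m n - T r) *\<^sub>v u)"
    by (rule assoc_mult_mat_vec[OF Nr(1) minus_carrier_mat[OF Tr] u(1)])
  also have "(1\<^sub>m n - T r) *\<^sub>v u = u - T r *\<^sub>v u"
    using Tr u(1) by (simp add: minus_mult_distrib_mat_vec[of _ n n])
  also have "N r *\<^sub>v (u - T r *\<^sub>v u) \<le> N r *\<^sub>v ((rA - r) \<cdot>\<^sub>v (K *\<^sub>v u))"
    using sub Nr(1) N_nonneg[OF r] u(1) Tr K by (intro mult_mat_vec_mono[of _ n n]) auto
  also have "\<dots> = (rA - r) \<cdot>\<^sub>v (N r *\<^sub>v (K *\<^sub>v u))" using Nr(1) K u(1) by (simp add: mult_mat_vec)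
  finally show ?thesis .
qed

text \<open>For r near rA the Perron vector of T rA makes some entry of each row of N r of order
  1 / (rA - r); comparability of the entries within a row then makes a diagonal entry of M r large.\<close>

lemma rho_M_exceeds_1:
  obtains r where "0 \<le> r" "r < rA" "1 < rho (M r)"
proof -
  have rA: "0 \<le> rA" using rA_pos by simp
  obtain u where u: "u \<in> carrier_vec n" "\<forall>i<n. 0 < u $ i" "rho (T rA) \<cdot>\<^sub>v u \<le> T rA *\<^sub>v u"
    using irreducible_perron_vector[OF T_carrier T_nonneg[OF rA] T_irreducible[OF rA] n] .
  have u0: "0\<^sub>v n \<le> u" using positive_vecD[OF u(1,2) n] by simp
  have Tu: "u \<le> T rA *\<^sub>v u" using u(3) rho_rA u(1) unfolding T_def by simp
  obtain \<gamma> where \<gamma>: "0 < \<gamma>"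
    "\<And>r i j k. 0 \<le> r \<Longrightarrow> r < rA \<Longrightarrow> i < n \<Longrightarrow> j < n \<Longrightarrow> k < n \<Longrightarrow> \<gamma> * N r $$ (i, j) \<le> N r $$ (i, k)"
    using N_rows_comparable by blast
  have Ku: "K *\<^sub>v u \<in> carrier_vec n" "0\<^sub>v n \<le> K *\<^sub>v u"
    using u(1) mult_mat_vec_nonneg[OF K u(1) K_nonneg u0] K by auto
  define \<kappa> where "\<kappa> = (\<Sum>j = 0..<n. (K *\<^sub>v u) $ j)"
  obtain p where p: "p < n" "0 < (K *\<^sub>v u) $ p"
    using mult_mat_vec_positive_entry[OF K K_nonneg K_nonzero u(1,2)] .
  note \<open>0 < (K *\<^sub>v u) $ p\<close>
  also have "(K *\<^sub>v u) $ p \<le> \<kappa>" unfolding \<kappa>_def using nonneg_vecD[OF Ku(2)] p(1) by (intro member_le_sum) auto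
  finally have "0 < \<kappa>" .
  obtain k0 where k0: "k0 < n" "B $$ (k0, 0) \<noteq> 0" using B_cols n by blast
  have "0 < B $$ (k0, 0)" using nonneg_matD[OF B_nonneg B k0(1) n] k0(2) by linarith
  define C where "C = \<gamma> * u $ 0 * l 0 * B $$ (k0, 0) / \<kappa>"
  have "0 < C" unfolding C_def using \<gamma>(1) u(2) n l_pos \<open>0 < B $$ (k0, 0)\<close> \<open>0 < \<kappa>\<close> by simp
  define r where "r = rA - min rA (C / 2)"
  have r: "0 \<le> r" "r < rA" "0 < rA - r" "rA - r \<le> C / 2"
    using \<open>0 < C\<close> rA_pos unfolding r_def by (auto simp: min_def)
  note Nr = N_inverse[OF r(1,2)]
  have "u $ 0 \<le> ((rA - r) \<cdot>\<^sub>v (N r *\<^sub>v (K *\<^sub>v u))) $ 0"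
    using N_mult_K_ge[OF r(1,2) u(1) Tu] n Nr(1) K u(1) by (intro less_eq_vecD[of _ _ n]) auto
  also have "\<dots> = (rA - r) * (\<Sum>j = 0..<n. N r $$ (0, j) * (K *\<^sub>v u) $ j)"
    using n Nr(1) Ku(1) by (simp add: index_mult_mat_vec_sum[of _ n n] del: index_mult_mat_vec)
  also have "\<dots> \<le> (rA - r) * (\<Sum>j = 0..<n. N r $$ (0, k0) / \<gamma> * (K *\<^sub>v u) $ j)"
    using \<gamma> r k0 n nonneg_vecD[OF Ku(2)]
    by (intro mult_left_mono sum_mono mult_right_mono) (auto simp: le_divide_eq mult.commute)
  also have "\<dots> = (rA - r) * \<kappa> * N r $$ (0, k0) / \<gamma>"
    unfolding \<kappa>_def by (simp add: sum_distrib_left sum_divide_distrib ac_simps)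
  finally have N_large: "\<gamma> * u $ 0 \<le> (rA - r) * \<kappa> * N r $$ (0, k0)"
    using \<gamma>(1) by (simp add: field_simps)
  have "2 \<le> C / (rA - r)" using r by (simp add: le_divide_eq)
  also have "C / (rA - r) = l 0 * B $$ (k0, 0) * (\<gamma> * u $ 0 / ((rA - r) * \<kappa>))"
    unfolding C_def using r \<open>0 < \<kappa>\<close> by (simp add: field_simps)
  also have "\<dots> \<le> l 0 * B $$ (k0, 0) * N r $$ (0, k0)"
    using N_large r \<open>0 < \<kappa>\<close> l_pos n \<open>0 < B $$ (k0, 0)\<close>
    by (intro mult_left_mono) (auto simp: divide_le_eq mult.commute)
  also have "\<dots> \<le> M r $$ (0, 0)" using M_entry_ge[OF r(1,2) n k0(1) n] by (simp add: ac_simps)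
  also have "\<dots> \<le> rho (M r)" by (rule diag_le_rho[OF M_carrier[OF r(1,2)] M_nonneg[OF r(1,2)] n])
  finally show ?thesis using that r by fastforce
qed

theorem rho_M_threshold:
  assumes "rho (M 0) < 1"
  shows "\<exists>rs. 0 < rs \<and> rs < rA \<and> rho (M rs) = 1
           \<and> (\<forall>r. 0 < r \<and> r < rA \<and> rho (M r) = 1 \<longrightarrow> r = rs)
           \<and> (\<forall>r. 0 \<le> r \<and> r < rs \<longrightarrow> rho (M r) < 1)
           \<and> (\<forall>r. rs < r \<and> r < rA \<longrightarrow> rho (M r) > 1
                \<and> \<not> (\<exists>w :: real vec. dim_vec w = n \<and> (\<forall>j<n. w $ j > 0)
                       \<and> (\<forall>j<n. (transpose_mat (1\<^sub>m n - M r) *\<^sub>v w) $ j \<ge> 0)))"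
proof -
  obtain rs where rs: "0 < rs" "rs < rA" "rho (M rs) = 1"
    and below: "\<And>r. 0 \<le> r \<Longrightarrow> r < rs \<Longrightarrow> rho (M r) < 1"
    and above: "\<And>r. rs < r \<Longrightarrow> r < rA \<Longrightarrow> 1 < rho (M r)"
  proof (rule strict_mono_crosses_one[of rA "\<lambda>r. rho (M r)"])
    show "\<exists>r>s. r < rA \<and> rho (M r) < 1" if "0 \<le> s" "s < rA" "rho (M s) < 1" for s
      using rho_M_lt_1_extends_right[OF that] by metis
    show "\<exists>r\<ge>0. r < s \<and> 1 < rho (M r)" if "0 < s" "s < rA" "1 < rho (M s)" for s
      using rho_M_gt_1_extends_left[OF that] by metis
    show "\<exists>r\<ge>0. r < rA \<and> 1 < rho (M r)" using rho_M_exceeds_1 by metis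
  qed (use rho_M_strict_mono rA_pos assms in auto)
  show ?thesis
  proof (intro exI[of _ rs] conjI allI impI)
    fix r
    show "r = rs" if "0 < r \<and> r < rA \<and> rho (M r) = 1"
      using below[of r] above[of r] that by (cases r rs rule: linorder_cases) auto
    show "rho (M r) < 1" if "0 \<le> r \<and> r < rs" using below that by blast
    assume r: "rs < r \<and> r < rA"
    then show "1 < rho (M r)" using above by blast
    show "\<not> (\<exists>w :: real vec. dim_vec w = n \<and> (\<forall>j<n. w $ j > 0)
              \<and> (\<forall>j<n. (transpose_mat (1\<^sub>m n - M r) *\<^sub>v w) $ j \<ge> 0))"
      using r rs above[of r]
      by (intro rho_gt_1_no_positive_left_subinvariant[OF M_carrier M_nonneg n]) auto
  qed (use rs in auto)
qed

end

theorem mainTheorem9: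
  fixes n :: nat and A K B :: "real mat" and \<delta> l :: "nat \<Rightarrow> real" and rA :: real
  assumes n2: "n \<ge> 2"
    and A: "A \<in> carrier_mat n n" and K: "K \<in> carrier_mat n n" and B: "B \<in> carrier_mat n n"
    and A_nn: "nonneg_mat A" and K_nn: "nonneg_mat K" and B_nn: "nonneg_mat B"
    and K_nz: "K \<noteq> 0\<^sub>m n n"
    and \<delta>: "\<forall>j<n. 0 < \<delta> j \<and> \<delta> j \<le> 1"
    and l: "\<forall>j<n. 0 < l j"
    and B_col: "\<forall>j<n. \<exists>i<n. B $$ (i, j) \<noteq> 0"
    and irr: "irreducible_mat (A + K * mat_diag n \<delta>)"
    and rho_lt: "rho (A + K * mat_diag n \<delta>) < 1"
    and rA_pos: "0 < rA"
    and rA_def: "rho (A + K * mat_diag n \<delta> + rA \<cdot>\<^sub>m K) = 1"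
    and M0: "rho (Mmat n (mat_diag n l) (A + K * mat_diag n \<delta>) K B 0) < 1"
  shows "\<exists>rs. 0 < rs \<and> rs < rA
           \<and> rho (Mmat n (mat_diag n l) (A + K * mat_diag n \<delta>) K B rs) = 1
           \<and> (\<forall>r. 0 < r \<and> r < rA \<and> rho (Mmat n (mat_diag n l) (A + K * mat_diag n \<delta>) K B r) = 1
                  \<longrightarrow> r = rs)
           \<and> (\<forall>r. 0 \<le> r \<and> r < rs \<longrightarrow> rho (Mmat n (mat_diag n l) (A + K * mat_diag n \<delta>) K B r) < 1)
           \<and> (\<forall>r. rs < r \<and> r < rA \<longrightarrow>
                  rho (Mmat n (mat_diag n l) (A + K * mat_diag n \<delta>) K B r) > 1
                \<and> \<not> (\<exists>w :: real vec. dim_vec w = n \<and> (\<forall>j<n. w $ j > 0)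
                       \<and> (\<forall>j<n. (transpose_mat (1\<^sub>m n - Mmat n (mat_diag n l) (A + K * mat_diag n \<delta>) K B r) *\<^sub>v w) $ j \<ge> 0)))"
proof -
  have KD: "K * mat_diag n \<delta> \<in> carrier_mat n n" "nonneg_mat (K * mat_diag n \<delta>)"
    using K_nn \<delta> by (auto simp: mat_diag_mult_right[OF K] nonneg_mat_def less_imp_le nonneg_matD[OF K_nn K])
  interpret standing_assumptions n "A + K * mat_diag n \<delta>" K B l rA
    using n2 A K B KD A_nn K_nn B_nn K_nz l B_col irr rA_pos rA_def
    by unfold_locales (auto intro: nonneg_mat_add[of _ n n])
  show ?thesis using rho_M_threshold M0 unfolding M_def .
qed

end
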